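(* Let $K$ be an algebraically closed field, $\mathcal{T}$ a $\operatorname{Hom}$-finite Krull–Schmidt triangulated $K$-category with Jacobson radical $\mathcal{J}$, and $\mathcal{I}$ a functorially finite ideal. Let $X$ and $Z$ be indecomposable and $Y=\coprod_{i=1}^nY_i^{m_i}$ with $Y_i$ indecomposable and $Y_i\not\cong Y_j$ for $i\neq j$. (1) A morphism $f=(f_{ij})^t:X\to Y$, with components $f_{ij}:X\to Y_i$ ($1\le j\le m_i$) lying in $\mathcal{I}$, is an $\mathcal{I}$-source map provided (i) for each $i$, the classes $\bar f_{i1},\dots,\bar f_{im_i}$ form a basis of $\operatorname{Irr}^-_{\mathcal{I}}(X,Y_i)$, and (ii) whenever $\operatorname{Irr}^-_{\mathcal{I}}(X,Y')\neq0$ with $Y'$ indecomposable, $Y'\cong Y_i$ for some $i$. (2) A morphism $g=(g_{ij}):Y\to Z$, with components $g_{ij}:Y_i\to Z$ lying in $\mathcal{I}$, is an $\mathcal{I}$-sink map provided (i) for each $i$, the classes $\bar g_{i1},\dots,\bar g_{im_i}$ form a basis of $\operatorname{Irr}^+_{\mathcal{I}}(Y_i,Z)$, and (ii) whenever $\operatorname{Irr}^+_{\mathcal{I}}(Y',Z)\neq0$ with $Y'$ indecomposable, $Y'\cong Y_i$ for some $i$.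
   Context: Composition of $b$ then $a$ is $ab$. An ideal: subgroups $\mathcal{I}(X,Y)\subseteq\operatorname{Hom}(X,Y)$ closed under composition; functorially finite if every object has left and right $\mathcal{I}$-approximations (morphisms of $\mathcal{I}$ starting/ending at the object through which all such morphisms of $\mathcal{I}$ factor). For ideals $\mathcal{A},\mathcal{B}$, $\mathcal{A}\mathcal{B}$ is the ideal of finite sums of composites $ab$, $a\in\mathcal{A}$, $b\in\mathcal{B}$. For indecomposable $A,B$: $\operatorname{Irr}^-_{\mathcal{I}}(A,B)=\mathcal{I}(A,B)/(\mathcal{J}\mathcal{I})(A,B)$ and $\operatorname{Irr}^+_{\mathcal{I}}(A,B)=\mathcal{I}(A,B)/(\mathcal{I}\mathcal{J})(A,B)$. An $\mathcal{I}$-source map is a left minimal left $\mathcal{I}$-approximation ($f$ left minimal: $gf=f$ implies $g$ invertible); an $\mathcal{I}$-sink map is a right minimal right $\mathcal{I}$-approximation. *)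

theory Defs
  imports "HOL-Computational_Algebra.Polynomial"
begin

definition alg_closed :: "'k::field itself \<Rightarrow> bool" where
  "alg_closed _ \<longleftrightarrow> (\<forall>p::'k poly. degree p > 0 \<longrightarrow> (\<exists>x. poly p x = 0))"

section \<open>K-linear categories (morphisms carry their domain/codomain)\<close>

text \<open>Composition convention: cmp C a b is "first b, then a", i.e. the composite ab.\<close>

record ('o, 'm, 'k) kcat =
  Obj :: "'o set"
  Hom :: "'o \<Rightarrow> 'o \<Rightarrow> 'm set"
  cmp :: "'m \<Rightarrow> 'm \<Rightarrow> 'm"
  idt :: "'o \<Rightarrow> 'm"
  madd :: "'m \<Rightarrow> 'm \<Rightarrow> 'm"
  mzero :: "'o \<Rightarrow> 'o \<Rightarrow> 'm"
  smul :: "'k \<Rightarrow> 'm \<Rightarrow> 'm"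

definition mneg :: "('o, 'm, 'k::field) kcat \<Rightarrow> 'm \<Rightarrow> 'm" where
  "mneg C f = smul C (-1) f"

definition msub :: "('o, 'm, 'k::field) kcat \<Rightarrow> 'm \<Rightarrow> 'm \<Rightarrow> 'm" where
  "msub C f g = madd C f (mneg C g)"

definition k_linear_cat :: "('o, 'm, 'k::field) kcat \<Rightarrow> bool" where
  "k_linear_cat C \<longleftrightarrow>
     (\<forall>X Y. Hom C X Y \<noteq> {} \<longrightarrow> X \<in> Obj C \<and> Y \<in> Obj C) \<and>
     (\<forall>X Y X' Y'. Hom C X Y \<inter> Hom C X' Y' \<noteq> {} \<longrightarrow> X = X' \<and> Y = Y') \<and>
     (\<forall>X\<in>Obj C. idt C X \<in> Hom C X X) \<and>
     (\<forall>X Y Z f g. f \<in> Hom C X Y \<longrightarrow> g \<in> Hom C Y Z \<longrightarrow> cmp C g f \<in> Hom C X Z) \<and>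
     (\<forall>W X Y Z f g h. f \<in> Hom C W X \<longrightarrow> g \<in> Hom C X Y \<longrightarrow> h \<in> Hom C Y Z \<longrightarrow>
        cmp C h (cmp C g f) = cmp C (cmp C h g) f) \<and>
     (\<forall>X Y f. f \<in> Hom C X Y \<longrightarrow> cmp C (idt C Y) f = f \<and> cmp C f (idt C X) = f) \<and>
     (\<forall>X\<in>Obj C. \<forall>Y\<in>Obj C.
        mzero C X Y \<in> Hom C X Y \<and>
        (\<forall>f\<in>Hom C X Y. \<forall>g\<in>Hom C X Y. madd C f g \<in> Hom C X Y) \<and>
        (\<forall>a f. f \<in> Hom C X Y \<longrightarrow> smul C a f \<in> Hom C X Y) \<and>
        (\<forall>f\<in>Hom C X Y. \<forall>g\<in>Hom C X Y. \<forall>h\<in>Hom C X Y.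
            madd C (madd C f g) h = madd C f (madd C g h)) \<and>
        (\<forall>f\<in>Hom C X Y. \<forall>g\<in>Hom C X Y. madd C f g = madd C g f) \<and>
        (\<forall>f\<in>Hom C X Y. madd C (mzero C X Y) f = f) \<and>
        (\<forall>f\<in>Hom C X Y. madd C f (mneg C f) = mzero C X Y) \<and>
        (\<forall>a. \<forall>f\<in>Hom C X Y. \<forall>g\<in>Hom C X Y.
            smul C a (madd C f g) = madd C (smul C a f) (smul C a g)) \<and>
        (\<forall>a b. \<forall>f\<in>Hom C X Y. smul C (a + b) f = madd C (smul C a f) (smul C b f)) \<and>
        (\<forall>a b. \<forall>f\<in>Hom C X Y. smul C (a * b) f = smul C a (smul C b f)) \<and>
        (\<forall>f\<in>Hom C X Y. smul C 1 f = f)) \<and>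
     (\<forall>X Y Z f g g' a. f \<in> Hom C X Y \<longrightarrow> g \<in> Hom C Y Z \<longrightarrow> g' \<in> Hom C Y Z \<longrightarrow>
        cmp C (madd C g g') f = madd C (cmp C g f) (cmp C g' f) \<and>
        cmp C (smul C a g) f = smul C a (cmp C g f)) \<and>
     (\<forall>X Y Z f f' g a. f \<in> Hom C X Y \<longrightarrow> f' \<in> Hom C X Y \<longrightarrow> g \<in> Hom C Y Z \<longrightarrow>
        cmp C g (madd C f f') = madd C (cmp C g f) (cmp C g f') \<and>
        cmp C g (smul C a f) = smul C a (cmp C g f))"

definition lsum :: "('o, 'm, 'k) kcat \<Rightarrow> 'o \<Rightarrow> 'o \<Rightarrow> 'm list \<Rightarrow> 'm" where
  "lsum C X Y fs = foldr (madd C) fs (mzero C X Y)"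

definition lincomb :: "('o, 'm, 'k) kcat \<Rightarrow> 'o \<Rightarrow> 'o \<Rightarrow> 'k list \<Rightarrow> 'm list \<Rightarrow> 'm" where
  "lincomb C X Y cs fs = lsum C X Y (map (\<lambda>(c, f). smul C c f) (zip cs fs))"

definition is_iso :: "('o, 'm, 'k) kcat \<Rightarrow> 'o \<Rightarrow> 'o \<Rightarrow> 'm \<Rightarrow> bool" where
  "is_iso C X Y f \<longleftrightarrow> f \<in> Hom C X Y \<and>
     (\<exists>g\<in>Hom C Y X. cmp C g f = idt C X \<and> cmp C f g = idt C Y)"

definition isomorphic :: "('o, 'm, 'k) kcat \<Rightarrow> 'o \<Rightarrow> 'o \<Rightarrow> bool" where
  "isomorphic C X Y \<longleftrightarrow> (\<exists>f. is_iso C X Y f)"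

definition is_zero_obj :: "('o, 'm, 'k) kcat \<Rightarrow> 'o \<Rightarrow> bool" where
  "is_zero_obj C N \<longleftrightarrow> N \<in> Obj C \<and> idt C N = mzero C N N"

definition is_biproduct ::
  "('o, 'm, 'k) kcat \<Rightarrow> 'i list \<Rightarrow> ('i \<Rightarrow> 'o) \<Rightarrow> 'o \<Rightarrow> ('i \<Rightarrow> 'm) \<Rightarrow> ('i \<Rightarrow> 'm) \<Rightarrow> bool" where
  "is_biproduct C idx A Y \<iota> \<pi> \<longleftrightarrow>
     Y \<in> Obj C \<and> distinct idx \<and>
     (\<forall>a\<in>set idx. A a \<in> Obj C \<and> \<iota> a \<in> Hom C (A a) Y \<and> \<pi> a \<in> Hom C Y (A a)) \<and>
     (\<forall>a\<in>set idx. \<forall>b\<in>set idx.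
        cmp C (\<pi> a) (\<iota> b) = (if a = b then idt C (A a) else mzero C (A b) (A a))) \<and>
     lsum C Y Y (map (\<lambda>a. cmp C (\<iota> a) (\<pi> a)) idx) = idt C Y"

definition additive :: "('o, 'm, 'k) kcat \<Rightarrow> bool" where
  "additive C \<longleftrightarrow> (\<forall>As. set As \<subseteq> Obj C \<longrightarrow>
     (\<exists>Y (\<iota>::nat \<Rightarrow> 'm) \<pi>. is_biproduct C [0..<length As] (\<lambda>i. As ! i) Y \<iota> \<pi>))"

definition indecomposable :: "('o, 'm, 'k) kcat \<Rightarrow> 'o \<Rightarrow> bool" where
  "indecomposable C X \<longleftrightarrow> X \<in> Obj C \<and> \<not> is_zero_obj C X \<and>
     (\<forall>A (\<iota>::nat \<Rightarrow> 'm) \<pi>. is_biproduct C [0, 1] A X \<iota> \<pi> \<longrightarrow>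
        is_zero_obj C (A 0) \<or> is_zero_obj C (A 1))"

definition local_end :: "('o, 'm, 'k) kcat \<Rightarrow> 'o \<Rightarrow> bool" where
  "local_end C X \<longleftrightarrow> X \<in> Obj C \<and> idt C X \<noteq> mzero C X X \<and>
     (\<forall>a\<in>Hom C X X. \<forall>b\<in>Hom C X X.
        \<not> is_iso C X X a \<and> \<not> is_iso C X X b \<longrightarrow> \<not> is_iso C X X (madd C a b))"

definition krull_schmidt :: "('o, 'm, 'k) kcat \<Rightarrow> bool" where
  "krull_schmidt C \<longleftrightarrow> additive C \<and>
     (\<forall>X\<in>Obj C. \<exists>As (\<iota>::nat \<Rightarrow> 'm) \<pi>. (\<forall>A\<in>set As. local_end C A) \<and>
        is_biproduct C [0..<length As] (\<lambda>i. As ! i) X \<iota> \<pi>)"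

definition hom_finite :: "('o, 'm, 'k) kcat \<Rightarrow> bool" where
  "hom_finite C \<longleftrightarrow> (\<forall>X\<in>Obj C. \<forall>Y\<in>Obj C. \<exists>fs. set fs \<subseteq> Hom C X Y \<and>
     (\<forall>h\<in>Hom C X Y. \<exists>cs. length cs = length fs \<and> h = lincomb C X Y cs fs))"

definition shift_functor ::
  "('o, 'm, 'k::field) kcat \<Rightarrow> ('o \<Rightarrow> 'o) \<Rightarrow> ('m \<Rightarrow> 'm) \<Rightarrow> bool" where
  "shift_functor C sh shm \<longleftrightarrow>
     (\<forall>X\<in>Obj C. sh X \<in> Obj C \<and> shm (idt C X) = idt C (sh X)) \<and>
     (\<forall>X Y f. f \<in> Hom C X Y \<longrightarrow> shm f \<in> Hom C (sh X) (sh Y)) \<and>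
     (\<forall>X Y Z f g. f \<in> Hom C X Y \<longrightarrow> g \<in> Hom C Y Z \<longrightarrow> shm (cmp C g f) = cmp C (shm g) (shm f)) \<and>
     (\<forall>X Y f g a. f \<in> Hom C X Y \<longrightarrow> g \<in> Hom C X Y \<longrightarrow>
        shm (madd C f g) = madd C (shm f) (shm g) \<and> shm (smul C a f) = smul C a (shm f)) \<and>
     (\<forall>X\<in>Obj C. \<forall>Y\<in>Obj C. bij_betw shm (Hom C X Y) (Hom C (sh X) (sh Y))) \<and>
     (\<forall>Y\<in>Obj C. \<exists>X\<in>Obj C. isomorphic C (sh X) Y)"

definition tri_wf ::
  "('o, 'm, 'k) kcat \<Rightarrow> ('o \<Rightarrow> 'o) \<Rightarrow> 'o \<Rightarrow> 'o \<Rightarrow> 'o \<Rightarrow> 'm \<Rightarrow> 'm \<Rightarrow> 'm \<Rightarrow> bool" where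
  "tri_wf C sh X Y Z u v w \<longleftrightarrow> X \<in> Obj C \<and> Y \<in> Obj C \<and> Z \<in> Obj C \<and>
     u \<in> Hom C X Y \<and> v \<in> Hom C Y Z \<and> w \<in> Hom C Z (sh X)"

definition tri_morph ::
  "('o, 'm, 'k) kcat \<Rightarrow> ('m \<Rightarrow> 'm) \<Rightarrow> 'o \<Rightarrow> 'o \<Rightarrow> 'o \<Rightarrow> 'm \<Rightarrow> 'm \<Rightarrow> 'm \<Rightarrow>
     'o \<Rightarrow> 'o \<Rightarrow> 'o \<Rightarrow> 'm \<Rightarrow> 'm \<Rightarrow> 'm \<Rightarrow> 'm \<Rightarrow> 'm \<Rightarrow> 'm \<Rightarrow> bool" where
  "tri_morph C shm X Y Z u v w X' Y' Z' u' v' w' a b c \<longleftrightarrow>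
     a \<in> Hom C X X' \<and> b \<in> Hom C Y Y' \<and> c \<in> Hom C Z Z' \<and>
     cmp C b u = cmp C u' a \<and> cmp C c v = cmp C v' b \<and> cmp C (shm a) w = cmp C w' c"

definition triangulated ::
  "('o, 'm, 'k::field) kcat \<Rightarrow> ('o \<Rightarrow> 'o) \<Rightarrow> ('m \<Rightarrow> 'm) \<Rightarrow>
     ('o \<times> 'o \<times> 'o \<times> 'm \<times> 'm \<times> 'm) set \<Rightarrow> bool" where
  "triangulated C sh shm \<Delta> \<longleftrightarrow>
     k_linear_cat C \<and> additive C \<and> shift_functor C sh shm \<and>
     (\<forall>X Y Z u v w. (X, Y, Z, u, v, w) \<in> \<Delta> \<longrightarrow> tri_wf C sh X Y Z u v w) \<and>
     \<comment> \<open>TR1: closure under isomorphism of triangles\<close>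
     (\<forall>X Y Z u v w X' Y' Z' u' v' w' a b c.
        (X, Y, Z, u, v, w) \<in> \<Delta> \<longrightarrow> tri_wf C sh X' Y' Z' u' v' w' \<longrightarrow>
        tri_morph C shm X Y Z u v w X' Y' Z' u' v' w' a b c \<longrightarrow>
        is_iso C X X' a \<longrightarrow> is_iso C Y Y' b \<longrightarrow> is_iso C Z Z' c \<longrightarrow>
        (X', Y', Z', u', v', w') \<in> \<Delta>) \<and>
     \<comment> \<open>TR1: trivial triangles\<close>
     (\<forall>X\<in>Obj C. \<forall>N0. is_zero_obj C N0 \<longrightarrow>
        (X, X, N0, idt C X, mzero C X N0, mzero C N0 (sh X)) \<in> \<Delta>) \<and>
     \<comment> \<open>TR1: every morphism embeds in a triangle\<close>
     (\<forall>X Y u. u \<in> Hom C X Y \<longrightarrow> (\<exists>Z v w. (X, Y, Z, u, v, w) \<in> \<Delta>)) \<and>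
     \<comment> \<open>TR2: rotation\<close>
     (\<forall>X Y Z u v w. tri_wf C sh X Y Z u v w \<longrightarrow>
        ((X, Y, Z, u, v, w) \<in> \<Delta> \<longleftrightarrow> (Y, Z, sh X, v, w, mneg C (shm u)) \<in> \<Delta>)) \<and>
     \<comment> \<open>TR3: completion of morphisms of triangles\<close>
     (\<forall>X Y Z u v w X' Y' Z' u' v' w' a b.
        (X, Y, Z, u, v, w) \<in> \<Delta> \<longrightarrow> (X', Y', Z', u', v', w') \<in> \<Delta> \<longrightarrow>
        a \<in> Hom C X X' \<longrightarrow> b \<in> Hom C Y Y' \<longrightarrow> cmp C b u = cmp C u' a \<longrightarrow>
        (\<exists>c. tri_morph C shm X Y Z u v w X' Y' Z' u' v' w' a b c)) \<and>
     \<comment> \<open>TR4: octahedral axiom\<close>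
     (\<forall>X Y Z u v Z' j k X' l i Y' m n.
        (X, Y, Z', u, j, k) \<in> \<Delta> \<longrightarrow> (Y, Z, X', v, l, i) \<in> \<Delta> \<longrightarrow>
        (X, Z, Y', cmp C v u, m, n) \<in> \<Delta> \<longrightarrow>
        (\<exists>f g. (Z', Y', X', f, g, cmp C (shm j) i) \<in> \<Delta> \<and>
           cmp C f j = cmp C m v \<and> cmp C n f = k \<and> cmp C g m = l \<and>
           cmp C i g = cmp C (shm u) n))"

definition is_ideal :: "('o, 'm, 'k::field) kcat \<Rightarrow> ('o \<Rightarrow> 'o \<Rightarrow> 'm set) \<Rightarrow> bool" where
  "is_ideal C I \<longleftrightarrow>
     (\<forall>X Y. I X Y \<subseteq> Hom C X Y) \<and>
     (\<forall>X\<in>Obj C. \<forall>Y\<in>Obj C. mzero C X Y \<in> I X Y \<and>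
        (\<forall>f\<in>I X Y. \<forall>g\<in>I X Y. madd C f g \<in> I X Y) \<and> (\<forall>f\<in>I X Y. mneg C f \<in> I X Y)) \<and>
     (\<forall>W X Y f h. f \<in> I X Y \<longrightarrow> h \<in> Hom C W X \<longrightarrow> cmp C f h \<in> I W Y) \<and>
     (\<forall>X Y Z f g. f \<in> I X Y \<longrightarrow> g \<in> Hom C Y Z \<longrightarrow> cmp C g f \<in> I X Z)"

definition jac_rad :: "('o, 'm, 'k::field) kcat \<Rightarrow> 'o \<Rightarrow> 'o \<Rightarrow> 'm set" where
  "jac_rad C X Y = {f \<in> Hom C X Y. \<forall>g\<in>Hom C Y X. is_iso C X X (msub C (idt C X) (cmp C g f))}"

inductive_set ideal_prod ::
  "('o, 'm, 'k) kcat \<Rightarrow> ('o \<Rightarrow> 'o \<Rightarrow> 'm set) \<Rightarrow> ('o \<Rightarrow> 'o \<Rightarrow> 'm set) \<Rightarrow> 'o \<Rightarrow> 'o \<Rightarrow> 'm set"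
  for C A B X Y where
    ip_zero: "mzero C X Y \<in> ideal_prod C A B X Y"
  | ip_step: "b \<in> B X W \<Longrightarrow> a \<in> A W Y \<Longrightarrow> s \<in> ideal_prod C A B X Y \<Longrightarrow>
              madd C (cmp C a b) s \<in> ideal_prod C A B X Y"

definition left_approx :: "('o, 'm, 'k) kcat \<Rightarrow> ('o \<Rightarrow> 'o \<Rightarrow> 'm set) \<Rightarrow> 'o \<Rightarrow> 'o \<Rightarrow> 'm \<Rightarrow> bool" where
  "left_approx C I X A f \<longleftrightarrow> f \<in> I X A \<and>
     (\<forall>A' f'. f' \<in> I X A' \<longrightarrow> (\<exists>h\<in>Hom C A A'. f' = cmp C h f))"

definition right_approx :: "('o, 'm, 'k) kcat \<Rightarrow> ('o \<Rightarrow> 'o \<Rightarrow> 'm set) \<Rightarrow> 'o \<Rightarrow> 'o \<Rightarrow> 'm \<Rightarrow> bool" where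
  "right_approx C I A X g \<longleftrightarrow> g \<in> I A X \<and>
     (\<forall>A' g'. g' \<in> I A' X \<longrightarrow> (\<exists>h\<in>Hom C A' A. g' = cmp C g h))"

definition functorially_finite :: "('o, 'm, 'k) kcat \<Rightarrow> ('o \<Rightarrow> 'o \<Rightarrow> 'm set) \<Rightarrow> bool" where
  "functorially_finite C I \<longleftrightarrow> (\<forall>X\<in>Obj C.
     (\<exists>A f. left_approx C I X A f) \<and> (\<exists>A g. right_approx C I A X g))"

definition left_minimal :: "('o, 'm, 'k) kcat \<Rightarrow> 'o \<Rightarrow> 'o \<Rightarrow> 'm \<Rightarrow> bool" where
  "left_minimal C X Y f \<longleftrightarrow> f \<in> Hom C X Y \<and>
     (\<forall>g\<in>Hom C Y Y. cmp C g f = f \<longrightarrow> is_iso C Y Y g)"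

definition right_minimal :: "('o, 'm, 'k) kcat \<Rightarrow> 'o \<Rightarrow> 'o \<Rightarrow> 'm \<Rightarrow> bool" where
  "right_minimal C Y Z g \<longleftrightarrow> g \<in> Hom C Y Z \<and>
     (\<forall>h\<in>Hom C Y Y. cmp C g h = g \<longrightarrow> is_iso C Y Y h)"

definition source_map :: "('o, 'm, 'k) kcat \<Rightarrow> ('o \<Rightarrow> 'o \<Rightarrow> 'm set) \<Rightarrow> 'o \<Rightarrow> 'o \<Rightarrow> 'm \<Rightarrow> bool" where
  "source_map C I X Y f \<longleftrightarrow> left_approx C I X Y f \<and> left_minimal C X Y f"

definition sink_map :: "('o, 'm, 'k) kcat \<Rightarrow> ('o \<Rightarrow> 'o \<Rightarrow> 'm set) \<Rightarrow> 'o \<Rightarrow> 'o \<Rightarrow> 'm \<Rightarrow> bool" where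
  "sink_map C I Y Z g \<longleftrightarrow> right_approx C I Y Z g \<and> right_minimal C Y Z g"

text \<open>The classes of fs form a basis of the quotient space V / N (both inside Hom(X,Y)).\<close>

definition quot_basis ::
  "('o, 'm, 'k::field) kcat \<Rightarrow> 'o \<Rightarrow> 'o \<Rightarrow> 'm set \<Rightarrow> 'm set \<Rightarrow> 'm list \<Rightarrow> bool" where
  "quot_basis C X Y V N fs \<longleftrightarrow> set fs \<subseteq> V \<and>
     (\<forall>cs. length cs = length fs \<longrightarrow> lincomb C X Y cs fs \<in> N \<longrightarrow> (\<forall>c\<in>set cs. c = 0)) \<and>
     (\<forall>h\<in>V. \<exists>cs. length cs = length fs \<and> msub C h (lincomb C X Y cs fs) \<in> N)"

text \<open>Irr^-_I(A,B) = I(A,B)/(J I)(A,B);  Irr^+_I(A,B) = I(A,B)/(I J)(A,B).\<close>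

definition irr_minus_basis ::
  "('o, 'm, 'k::field) kcat \<Rightarrow> ('o \<Rightarrow> 'o \<Rightarrow> 'm set) \<Rightarrow> 'o \<Rightarrow> 'o \<Rightarrow> 'm list \<Rightarrow> bool" where
  "irr_minus_basis C I A B fs \<longleftrightarrow> quot_basis C A B (I A B) (ideal_prod C (jac_rad C) I A B) fs"

definition irr_plus_basis ::
  "('o, 'm, 'k::field) kcat \<Rightarrow> ('o \<Rightarrow> 'o \<Rightarrow> 'm set) \<Rightarrow> 'o \<Rightarrow> 'o \<Rightarrow> 'm list \<Rightarrow> bool" where
  "irr_plus_basis C I A B fs \<longleftrightarrow> quot_basis C A B (I A B) (ideal_prod C I (jac_rad C) A B) fs"

definition irr_minus_nonzero ::
  "('o, 'm, 'k::field) kcat \<Rightarrow> ('o \<Rightarrow> 'o \<Rightarrow> 'm set) \<Rightarrow> 'o \<Rightarrow> 'o \<Rightarrow> bool" where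
  "irr_minus_nonzero C I A B \<longleftrightarrow> \<not> I A B \<subseteq> ideal_prod C (jac_rad C) I A B"

definition irr_plus_nonzero ::
  "('o, 'm, 'k::field) kcat \<Rightarrow> ('o \<Rightarrow> 'o \<Rightarrow> 'm set) \<Rightarrow> 'o \<Rightarrow> 'o \<Rightarrow> bool" where
  "irr_plus_nonzero C I A B \<longleftrightarrow> \<not> I A B \<subseteq> ideal_prod C I (jac_rad C) A B"

text \<open>Index list for the summands Y_i^{m_i}: pairs (i,j), i < n, j < m i.\<close>

definition bp_index :: "nat \<Rightarrow> (nat \<Rightarrow> nat) \<Rightarrow> (nat \<times> nat) list" where
  "bp_index n m = concat (map (\<lambda>i. map (\<lambda>j. (i, j)) [0..<m i]) [0..<n])"

end

theory Submission
  imports Defs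
begin

text \<open>
  Let \<open>u : X \<rightarrow> A\<close> be a left \<open>I\<close>-approximation. A morphism of \<open>I\<close> from \<open>X\<close> to an
  object with local endomorphism ring either lies in \<open>JI\<close>, and then factors as a radical map
  after \<open>u\<close>, or its target is some \<open>Y\<^sub>i\<close> and modulo \<open>JI\<close> it is a combination of the
  components \<open>f\<^sub>i\<^sub>j\<close>. With Krull-Schmidt decompositions this gives \<open>u = h f + r u\<close> with
  \<open>r\<close> radical, so \<open>1 - r\<close> is invertible and \<open>u\<close>, hence all of \<open>I(X, -)\<close>, factors
  through \<open>f\<close>.

  For minimality let \<open>g f = f\<close>. Every block of \<open>g\<close> between the summands is a scalar plus a
  radical map (eigenvalues exist on the finite-dimensional local endomorphism rings over the
  algebraically closed field, and maps between non-isomorphic indecomposables are radical).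
  Expanding \<open>f\<^sub>i\<^sub>j = \<pi>\<^sub>i\<^sub>j g f\<close> and using that the \<open>f\<^sub>i\<^sub>j\<close> are
  independent modulo \<open>JI\<close> forces these scalars to be those of the identity, so \<open>g - 1\<close> is
  radical and \<open>g\<close> is invertible. The statement on sink maps is the dual one.
\<close>

section \<open>Linear categories\<close>

locale linear_category =
  fixes C :: "('o, 'm, 'k::field) kcat"
  assumes objects_of_hom: "\<forall>X Y. Hom C X Y \<noteq> {} \<longrightarrow> X \<in> Obj C \<and> Y \<in> Obj C"
    and homs_disjoint: "\<forall>X Y X' Y'. Hom C X Y \<inter> Hom C X' Y' \<noteq> {} \<longrightarrow> X = X' \<and> Y = Y'"
    and id_in_hom: "\<forall>X\<in>Obj C. idt C X \<in> Hom C X X"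
    and cmp_in_hom: "\<forall>X Y Z f g. f \<in> Hom C X Y \<longrightarrow> g \<in> Hom C Y Z \<longrightarrow> cmp C g f \<in> Hom C X Z"
    and cmp_associative: "\<forall>W X Y Z f g h. f \<in> Hom C W X \<longrightarrow> g \<in> Hom C X Y \<longrightarrow> h \<in> Hom C Y Z \<longrightarrow>
        cmp C h (cmp C g f) = cmp C (cmp C h g) f"
    and cmp_unital: "\<forall>X Y f. f \<in> Hom C X Y \<longrightarrow> cmp C (idt C Y) f = f \<and> cmp C f (idt C X) = f"
    and zero_in_hom: "\<forall>X\<in>Obj C. \<forall>Y\<in>Obj C. mzero C X Y \<in> Hom C X Y"
    and madd_in_hom: "\<forall>X\<in>Obj C. \<forall>Y\<in>Obj C. \<forall>f\<in>Hom C X Y. \<forall>g\<in>Hom C X Y. madd C f g \<in> Hom C X Y"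
    and smul_in_hom: "\<forall>X\<in>Obj C. \<forall>Y\<in>Obj C. \<forall>a f. f \<in> Hom C X Y \<longrightarrow> smul C a f \<in> Hom C X Y"
    and madd_associative: "\<forall>X\<in>Obj C. \<forall>Y\<in>Obj C. \<forall>f\<in>Hom C X Y. \<forall>g\<in>Hom C X Y. \<forall>h\<in>Hom C X Y.
        madd C (madd C f g) h = madd C f (madd C g h)"
    and madd_commutative: "\<forall>X\<in>Obj C. \<forall>Y\<in>Obj C. \<forall>f\<in>Hom C X Y. \<forall>g\<in>Hom C X Y. madd C f g = madd C g f"
    and madd_zero_neutral: "\<forall>X\<in>Obj C. \<forall>Y\<in>Obj C. \<forall>f\<in>Hom C X Y. madd C (mzero C X Y) f = f"
    and madd_mneg_inverse: "\<forall>X\<in>Obj C. \<forall>Y\<in>Obj C. \<forall>f\<in>Hom C X Y. madd C f (mneg C f) = mzero C X Y"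
    and smul_madd_distrib: "\<forall>X\<in>Obj C. \<forall>Y\<in>Obj C. \<forall>a. \<forall>f\<in>Hom C X Y. \<forall>g\<in>Hom C X Y.
        smul C a (madd C f g) = madd C (smul C a f) (smul C a g)"
    and smul_add_distrib: "\<forall>X\<in>Obj C. \<forall>Y\<in>Obj C. \<forall>a b. \<forall>f\<in>Hom C X Y.
        smul C (a + b) f = madd C (smul C a f) (smul C b f)"
    and smul_mult_assoc: "\<forall>X\<in>Obj C. \<forall>Y\<in>Obj C. \<forall>a b. \<forall>f\<in>Hom C X Y. smul C (a * b) f = smul C a (smul C b f)"
    and smul_one_neutral: "\<forall>X\<in>Obj C. \<forall>Y\<in>Obj C. \<forall>f\<in>Hom C X Y. smul C 1 f = f"
    and cmp_linear_left: "\<forall>X Y Z f g g' a. f \<in> Hom C X Y \<longrightarrow> g \<in> Hom C Y Z \<longrightarrow> g' \<in> Hom C Y Z \<longrightarrow>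
        cmp C (madd C g g') f = madd C (cmp C g f) (cmp C g' f) \<and>
        cmp C (smul C a g) f = smul C a (cmp C g f)"
    and cmp_linear_right: "\<forall>X Y Z f f' g a. f \<in> Hom C X Y \<longrightarrow> f' \<in> Hom C X Y \<longrightarrow> g \<in> Hom C Y Z \<longrightarrow>
        cmp C g (madd C f f') = madd C (cmp C g f) (cmp C g f') \<and>
        cmp C g (smul C a f) = smul C a (cmp C g f)"

lemma linear_category_iff_k_linear_cat: "linear_category C \<longleftrightarrow> k_linear_cat C"
  unfolding linear_category_def k_linear_cat_def ball_conj_distrib by (simp only: conj_assoc)

context linear_category
begin

lemma hom_objects: "f \<in> Hom C X Y \<Longrightarrow> X \<in> Obj C \<and> Y \<in> Obj C"
  using objects_of_hom by blast

lemma hom_unique: "f \<in> Hom C X Y \<Longrightarrow> f \<in> Hom C X' Y' \<Longrightarrow>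
    X = X' \<and> Y = Y'"
  using homs_disjoint by blast

lemma id_hom: "X \<in> Obj C \<Longrightarrow> idt C X \<in> Hom C X X"
  using id_in_hom by blast

lemma cmp_hom: "f \<in> Hom C X Y \<Longrightarrow> g \<in> Hom C Y Z \<Longrightarrow>
    cmp C g f \<in> Hom C X Z"
  using cmp_in_hom by blast

lemma zero_hom: "X \<in> Obj C \<Longrightarrow> Y \<in> Obj C \<Longrightarrow> mzero C X Y \<in> Hom C X Y"
  using zero_in_hom by blast

lemma madd_hom: "f \<in> Hom C X Y \<Longrightarrow> g \<in> Hom C X Y \<Longrightarrow>
    madd C f g \<in> Hom C X Y"
  using madd_in_hom hom_objects by blast

lemma smul_hom: "f \<in> Hom C X Y \<Longrightarrow> smul C a f \<in> Hom C X Y"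
  using smul_in_hom hom_objects by blast

text \<open>Every morphism knows its source and target, so the typing side conditions of the
  algebraic laws below can be discharged by the simplifier.\<close>

definition arr :: "'m \<Rightarrow> bool" where "arr f \<longleftrightarrow> (\<exists>X Y. f \<in> Hom C X Y)"
definition src :: "'m \<Rightarrow> 'o" where "src f = (THE X. \<exists>Y. f \<in> Hom C X Y)"
definition tgt :: "'m \<Rightarrow> 'o" where "tgt f = (THE Y. \<exists>X. f \<in> Hom C X Y)"

lemma hom_iff: "f \<in> Hom C X Y \<longleftrightarrow> arr f \<and> src f = X \<and> tgt f = Y"
proof -
  have "src f = X \<and> tgt f = Y" if "f \<in> Hom C X Y" for X Y
    unfolding src_def tgt_def using that hom_unique by (intro conjI the_equality) blast+
  then show ?thesis unfolding arr_def by blast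
qed

lemma arr_hom: "arr f \<Longrightarrow> f \<in> Hom C (src f) (tgt f)"
  by (simp add: hom_iff)

lemma arr_objects[simp]: "arr f \<Longrightarrow> src f \<in> Obj C" "arr f \<Longrightarrow>
    tgt f \<in> Obj C"
  using hom_objects arr_hom by blast+

lemma arr_id[simp]: "X \<in> Obj C \<Longrightarrow>
    arr (idt C X)" "X \<in> Obj C \<Longrightarrow> src (idt C X) = X"
  "X \<in> Obj C \<Longrightarrow> tgt (idt C X) = X"
  using id_hom hom_iff by blast+

lemma arr_zero[simp]: "X \<in> Obj C \<Longrightarrow> Y \<in> Obj C \<Longrightarrow> arr (mzero C X Y)"
  "X \<in> Obj C \<Longrightarrow> Y \<in> Obj C \<Longrightarrow> src (mzero C X Y) = X"
  "X \<in> Obj C \<Longrightarrow> Y \<in> Obj C \<Longrightarrow> tgt (mzero C X Y) = Y"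
  using zero_hom hom_iff by blast+

lemma arr_cmp[simp]:
  assumes "arr f" "arr g" "src g = tgt f"
  shows "arr (cmp C g f)" "src (cmp C g f) = src f" "tgt (cmp C g f) = tgt g"
  using assms cmp_hom[of f "src f" "tgt f" g "tgt g"] by (simp_all add: hom_iff)

lemma arr_madd[simp]:
  assumes "arr f" "arr g" "src g = src f" "tgt g = tgt f"
  shows "arr (madd C f g)" "src (madd C f g) = src f" "tgt (madd C f g) = tgt f"
  using assms madd_hom[of f "src f" "tgt f" g] by (simp_all add: hom_iff)

lemma arr_smul[simp]:
  assumes "arr f"
  shows "arr (smul C a f)" "src (smul C a f) = src f" "tgt (smul C a f) = tgt f"
  using smul_hom[OF arr_hom, of f] assms by (simp_all add: hom_iff)

lemma arr_mneg[simp]: "arr f \<Longrightarrow> arr (mneg C f)" "arr f \<Longrightarrow>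
    src (mneg C f) = src f"
  "arr f \<Longrightarrow> tgt (mneg C f) = tgt f"
  unfolding mneg_def by simp_all

lemma arr_msub[simp]:
  assumes "arr f" "arr g" "src g = src f" "tgt g = tgt f"
  shows "arr (msub C f g)" "src (msub C f g) = src f" "tgt (msub C f g) = tgt f"
  unfolding msub_def using assms by simp_all

lemma cmp_assoc:
  "arr f \<Longrightarrow> arr g \<Longrightarrow> arr h \<Longrightarrow>
    src g = tgt f \<Longrightarrow> src h = tgt g \<Longrightarrow>
   cmp C (cmp C h g) f = cmp C h (cmp C g f)"
  using cmp_associative[rule_format, of f "src f" "tgt f" g "tgt g" h "tgt h"] by (simp add: hom_iff)

lemma cmp_id_left[simp]: "arr f \<Longrightarrow> Y = tgt f \<Longrightarrow> cmp C (idt C Y) f = f"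
  using cmp_unital arr_hom by blast

lemma cmp_id_right[simp]: "arr f \<Longrightarrow> X = src f \<Longrightarrow> cmp C f (idt C X) = f"
  using cmp_unital arr_hom by blast

lemma cmp_madd_left:
  "arr f \<Longrightarrow> arr g \<Longrightarrow> arr g' \<Longrightarrow>
    src g = tgt f \<Longrightarrow> src g' = tgt f \<Longrightarrow> tgt g' = tgt g \<Longrightarrow>
   cmp C (madd C g g') f = madd C (cmp C g f) (cmp C g' f)"
  using cmp_linear_left[rule_format, of f "src f" "tgt f" g "tgt g" g'] by (simp add: hom_iff)

lemma cmp_madd_right:
  "arr f \<Longrightarrow> arr g \<Longrightarrow> arr f' \<Longrightarrow>
    src g = tgt f \<Longrightarrow> src f' = src f \<Longrightarrow> tgt f' = tgt f \<Longrightarrow>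
   cmp C g (madd C f f') = madd C (cmp C g f) (cmp C g f')"
  using cmp_linear_right[rule_format, of f "src f" "tgt f" f' g "tgt g"] by (simp add: hom_iff)

lemma cmp_smul_left[simp]:
  "arr f \<Longrightarrow> arr g \<Longrightarrow> src g = tgt f \<Longrightarrow>
    cmp C (smul C a g) f = smul C a (cmp C g f)"
  using cmp_linear_left[rule_format, of f "src f" "tgt f" g "tgt g" g a] by (simp add: hom_iff)

lemma cmp_smul_right[simp]:
  "arr f \<Longrightarrow> arr g \<Longrightarrow> src g = tgt f \<Longrightarrow>
    cmp C g (smul C a f) = smul C a (cmp C g f)"
  using cmp_linear_right[rule_format, of f "src f" "tgt f" f g "tgt g" a] by (simp add: hom_iff)

lemma madd_assoc:
  "arr f \<Longrightarrow> arr g \<Longrightarrow> arr h \<Longrightarrow>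
    src g = src f \<Longrightarrow> tgt g = tgt f \<Longrightarrow> src h = src f \<Longrightarrow>
   tgt h = tgt f \<Longrightarrow> madd C (madd C f g) h = madd C f (madd C g h)"
  using madd_associative[rule_format, of "src f" "tgt f" f g h] by (simp add: hom_iff)

lemma madd_comm: "arr f \<Longrightarrow> arr g \<Longrightarrow> src g = src f \<Longrightarrow>
    tgt g = tgt f \<Longrightarrow> madd C f g = madd C g f"
  using madd_commutative[rule_format, of "src f" "tgt f" f g] by (simp add: hom_iff)

lemma madd_left_comm:
  "arr f \<Longrightarrow> arr g \<Longrightarrow> arr h \<Longrightarrow>
    src g = src f \<Longrightarrow> tgt g = tgt f \<Longrightarrow> src h = src f \<Longrightarrow>
   tgt h = tgt f \<Longrightarrow> madd C f (madd C g h) = madd C g (madd C f h)"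
  using madd_assoc[of f g h] madd_assoc[of g f h] madd_comm[of f g] by simp

lemma madd_zero_left[simp]: "arr f \<Longrightarrow> X = src f \<Longrightarrow>
    Y = tgt f \<Longrightarrow> madd C (mzero C X Y) f = f"
  using madd_zero_neutral[rule_format, of "src f" "tgt f" f] by (simp add: hom_iff)

lemma madd_zero_right[simp]: "arr f \<Longrightarrow> X = src f \<Longrightarrow>
    Y = tgt f \<Longrightarrow> madd C f (mzero C X Y) = f"
  using madd_comm[of f "mzero C X Y"] by simp

lemma madd_mneg: "arr f \<Longrightarrow> madd C f (mneg C f) = mzero C (src f) (tgt f)"
  using madd_mneg_inverse[rule_format, of "src f" "tgt f" f] by (simp add: hom_iff)

lemma smul_madd:
  "arr f \<Longrightarrow> arr g \<Longrightarrow> src g = src f \<Longrightarrow>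
    tgt g = tgt f \<Longrightarrow>
   smul C a (madd C f g) = madd C (smul C a f) (smul C a g)"
  using smul_madd_distrib[rule_format, of "src f" "tgt f" f g a] by (simp add: hom_iff)

lemma smul_add_scalar: "arr f \<Longrightarrow> smul C (a + b) f = madd C (smul C a f) (smul C b f)"
  using smul_add_distrib[rule_format, of "src f" "tgt f" f a b] by (simp add: hom_iff)

lemma smul_smul[simp]: "arr f \<Longrightarrow> smul C a (smul C b f) = smul C (a * b) f"
  using smul_mult_assoc[rule_format, of "src f" "tgt f" f a b] by (simp add: hom_iff)

lemma smul_one[simp]: "arr f \<Longrightarrow> smul C 1 f = f"
  using smul_one_neutral[rule_format, of "src f" "tgt f" f] by (simp add: hom_iff)

lemma cmp_cmp_middle:
  "f \<in> Hom C W A \<Longrightarrow> h \<in> Hom C A B \<Longrightarrow>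
    g \<in> Hom C B D \<Longrightarrow> k \<in> Hom C D Z \<Longrightarrow>
   cmp C (cmp C k g) (cmp C h f) = cmp C k (cmp C (cmp C g h) f)"
  by (simp add: hom_iff cmp_assoc)

lemma madd_left_cancel:
  assumes "arr f" "arr g" "arr h" "src g = src f" "tgt g = tgt f" "src h = src f" "tgt h = tgt f"
    and "madd C f g = madd C f h"
  shows "g = h"
proof -
  have neg: "madd C (mneg C f) f = mzero C (src f) (tgt f)"
    using assms madd_comm[of f "mneg C f"] madd_mneg by simp
  have "g = madd C (madd C (mneg C f) f) g" using assms neg by simp
  also have "\<dots> = madd C (mneg C f) (madd C f h)" using assms by (simp add: madd_assoc)
  also have "\<dots> = h" using assms neg by (simp flip: madd_assoc)
  finally show ?thesis .
qed

lemma smul_zero_scalar[simp]: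
  assumes "arr f"
  shows "smul C 0 f = mzero C (src f) (tgt f)"
proof (rule madd_left_cancel[of "smul C 0 f"])
  show "madd C (smul C 0 f) (smul C 0 f) = madd C (smul C 0 f) (mzero C (src f) (tgt f))"
    using assms smul_add_scalar[of f 0 0] by simp
qed (use assms in simp_all)

lemma cmp_zero_left[simp]:
  assumes "arr f" "Z \<in> Obj C" "Y = tgt f"
  shows "cmp C (mzero C Y Z) f = mzero C (src f) Z"
proof -
  have "cmp C (mzero C Y Z) f = cmp C (smul C 0 (mzero C Y Z)) f" using assms by simp
  also have "\<dots> = mzero C (src f) Z" using assms by (simp del: smul_zero_scalar) simp
  finally show ?thesis .
qed

lemma cmp_zero_right[simp]:
  assumes "arr g" "X \<in> Obj C" "Y = src g"
  shows "cmp C g (mzero C X Y) = mzero C X (tgt g)"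
proof -
  have "cmp C g (mzero C X Y) = cmp C g (smul C 0 (mzero C X Y))" using assms by simp
  also have "\<dots> = mzero C X (tgt g)" using assms by (simp del: smul_zero_scalar) simp
  finally show ?thesis .
qed

lemma smul_zero[simp]:
  assumes "X \<in> Obj C" "Y \<in> Obj C"
  shows "smul C a (mzero C X Y) = mzero C X Y"
proof -
  have "smul C a (mzero C X Y) = cmp C (mzero C X Y) (smul C a (idt C X))"
    using assms by (simp del: cmp_zero_left)
  also have "\<dots> = mzero C X Y" using assms by (simp del: cmp_smul_right)
  finally show ?thesis .
qed

lemma msub_self[simp]: "arr f \<Longrightarrow> msub C f f = mzero C (src f) (tgt f)"
  unfolding msub_def using madd_mneg[of f] by simp

lemma msub_eq_iff: "arr x \<Longrightarrow> arr y \<Longrightarrow> arr d \<Longrightarrow>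
    src y = src x \<Longrightarrow> tgt y = tgt x \<Longrightarrow> src d = src x \<Longrightarrow>
    tgt d = tgt x \<Longrightarrow>
  msub C x y = d \<longleftrightarrow> x = madd C y d"
proof
  assume a: "arr x" "arr y" "arr d" "src y = src x" "tgt y = tgt x" "src d = src x" "tgt d = tgt x"
  { assume e: "msub C x y = d"
    have "madd C y d = madd C y (madd C x (mneg C y))" using e by (simp add: msub_def)
    also have "\<dots> = madd C x (madd C y (mneg C y))" using a by (simp add: madd_left_comm)
    also have "\<dots> = x" using a by (simp add: madd_mneg)
    finally show "x = madd C y d" by simp }
  { assume e: "x = madd C y d"
    have "msub C x y = madd C (madd C y d) (mneg C y)" using e by (simp add: msub_def)
    also have "\<dots> = madd C d (madd C y (mneg C y))" using a by (simp add: madd_left_comm madd_comm[of y d] madd_assoc)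
    also have "\<dots> = d" using a by (simp add: madd_mneg)
    finally show "msub C x y = d" . }
qed

lemma cmp_mneg_left[simp]: "arr f \<Longrightarrow> arr g \<Longrightarrow>
    src g = tgt f \<Longrightarrow> cmp C (mneg C g) f = mneg C (cmp C g f)"
  by (simp add: mneg_def)
lemma cmp_mneg_right[simp]: "arr f \<Longrightarrow> arr g \<Longrightarrow>
    src g = tgt f \<Longrightarrow> cmp C g (mneg C f) = mneg C (cmp C g f)"
  by (simp add: mneg_def)
lemma cmp_msub_left: "arr f \<Longrightarrow> arr g \<Longrightarrow> arr g' \<Longrightarrow>
    src g = tgt f \<Longrightarrow> src g' = tgt f \<Longrightarrow> tgt g' = tgt g \<Longrightarrow>
        cmp C (msub C g g') f = msub C (cmp C g f) (cmp C g' f)"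
  unfolding msub_def by (simp add: cmp_madd_left)
lemma cmp_msub_right: "arr f \<Longrightarrow> arr g \<Longrightarrow> arr f' \<Longrightarrow>
    src g = tgt f \<Longrightarrow> src f' = src f \<Longrightarrow> tgt f' = tgt f \<Longrightarrow>
        cmp C g (msub C f f') = msub C (cmp C g f) (cmp C g f')"
  unfolding msub_def by (simp add: cmp_madd_right)

lemma mneg_mneg[simp]: "arr f \<Longrightarrow> mneg C (mneg C f) = f" by (simp add: mneg_def)
lemma mneg_madd: "arr f \<Longrightarrow> arr g \<Longrightarrow> src g = src f \<Longrightarrow>
    tgt g = tgt f \<Longrightarrow>
   mneg C (madd C f g) = madd C (mneg C f) (mneg C g)"
  by (simp add: mneg_def smul_madd)
lemma msub_zero[simp]: "arr f \<Longrightarrow> X = src f \<Longrightarrow>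
    Y = tgt f \<Longrightarrow> msub C f (mzero C X Y) = f"
  by (simp add: msub_def mneg_def)

lemma msub_msub: "arr x \<Longrightarrow> arr a \<Longrightarrow> arr b \<Longrightarrow>
    src a = src x \<Longrightarrow> tgt a = tgt x \<Longrightarrow> src b = src x \<Longrightarrow>
    tgt b = tgt x \<Longrightarrow>
  msub C (msub C x a) b = msub C x (madd C a b)"
proof -
  assume h: "arr x" "arr a" "arr b" "src a = src x" "tgt a = tgt x" "src b = src x" "tgt b = tgt x"
  have "msub C (msub C x a) b = madd C (madd C x (mneg C a)) (mneg C b)" by (simp add: msub_def)
  also have "\<dots> = madd C x (madd C (mneg C a) (mneg C b))" using h by (intro madd_assoc) auto
  also have "madd C (mneg C a) (mneg C b) = mneg C (madd C a b)" using h by (intro mneg_madd[symmetric]) auto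
  finally show ?thesis by (simp add: msub_def)
qed

lemma madd_msub_cancel: "arr e \<Longrightarrow> arr x \<Longrightarrow>
    src e = src x \<Longrightarrow> tgt e = tgt x \<Longrightarrow> madd C e (msub C x e) = x"
proof -
  assume a: "arr e" "arr x" "src e = src x" "tgt e = tgt x"
  have "madd C e (msub C x e) = madd C x (madd C e (mneg C e))"
    unfolding msub_def using a madd_left_comm[of e x "mneg C e"] by simp
  also have "\<dots> = x" using a by (simp add: madd_mneg)
  finally show ?thesis .
qed

definition msum :: "'o \<Rightarrow> 'o \<Rightarrow> 'a list \<Rightarrow> ('a \<Rightarrow> 'm) \<Rightarrow> 'm" where
  "msum X Y xs F = lsum C X Y (map F xs)"

lemma msum_Nil[simp]: "msum X Y [] F = mzero C X Y" by (simp add: msum_def lsum_def)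
lemma msum_Cons[simp]: "msum X Y (x # xs) F = madd C (F x) (msum X Y xs F)" by (simp add: msum_def lsum_def)

lemma msum_hom: "X \<in> Obj C \<Longrightarrow> Y \<in> Obj C \<Longrightarrow>
    (\<And>x. x \<in> set xs \<Longrightarrow> F x \<in> Hom C X Y) \<Longrightarrow>
    msum X Y xs F \<in> Hom C X Y"
  by (induction xs) (auto simp: zero_hom madd_hom)

lemma msum_cong: "(\<And>x. x \<in> set xs \<Longrightarrow> F x = G x) \<Longrightarrow>
    msum X Y xs F = msum X Y xs G"
  by (simp add: msum_def cong: map_cong)

lemma msum_append: "X \<in> Obj C \<Longrightarrow> Y \<in> Obj C \<Longrightarrow>
    (\<And>x. x \<in> set (xs @ ys) \<Longrightarrow> F x \<in> Hom C X Y) \<Longrightarrow>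
   msum X Y (xs @ ys) F = madd C (msum X Y xs F) (msum X Y ys F)"
proof (induction xs)
  case Nil
  then show ?case using msum_hom[of X Y ys F] hom_iff by simp
next
  case (Cons x xs)
  have h1: "F x \<in> Hom C X Y" using Cons by simp
  have h2: "msum X Y xs F \<in> Hom C X Y" "msum X Y ys F \<in> Hom C X Y" using Cons by (auto intro: msum_hom)
  show ?case using Cons h1 h2 by (simp add: madd_assoc hom_iff)
qed

lemma msum_zero: "X \<in> Obj C \<Longrightarrow> Y \<in> Obj C \<Longrightarrow>
    (\<And>x. x \<in> set xs \<Longrightarrow> F x = mzero C X Y) \<Longrightarrow>
    msum X Y xs F = mzero C X Y"
  by (induction xs) auto

lemma msum_madd: "X \<in> Obj C \<Longrightarrow> Y \<in> Obj C \<Longrightarrow>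
    (\<And>x. x \<in> set xs \<Longrightarrow> F x \<in> Hom C X Y) \<Longrightarrow>
    (\<And>x. x \<in> set xs \<Longrightarrow> G x \<in> Hom C X Y) \<Longrightarrow>
   msum X Y xs (\<lambda>x. madd C (F x) (G x)) = madd C (msum X Y xs F) (msum X Y xs G)"
proof (induction xs)
  case Nil
  then show ?case by simp
next
  case (Cons x xs)
  have h: "F x \<in> Hom C X Y" "G x \<in> Hom C X Y" "msum X Y xs F \<in> Hom C X Y" "msum X Y xs G \<in> Hom C X Y"
    using Cons by (auto intro: msum_hom)
  have "msum X Y (x # xs) (\<lambda>x. madd C (F x) (G x)) = madd C (madd C (F x) (G x)) (madd C (msum X Y xs F) (msum X Y xs G))"
    using Cons by simp
  also have "\<dots> = madd C (madd C (F x) (msum X Y xs F)) (madd C (G x) (msum X Y xs G))"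
    using h by (simp add: hom_iff madd_assoc madd_left_comm)
  finally show ?case by simp
qed

lemma smul_msum: "X \<in> Obj C \<Longrightarrow> Y \<in> Obj C \<Longrightarrow>
    (\<And>x. x \<in> set xs \<Longrightarrow> F x \<in> Hom C X Y) \<Longrightarrow>
   smul C c (msum X Y xs F) = msum X Y xs (\<lambda>x. smul C c (F x))"
proof (induction xs)
  case Nil
  then show ?case by simp
next
  case (Cons x xs)
  have h: "F x \<in> Hom C X Y" "msum X Y xs F \<in> Hom C X Y"
    using Cons by (auto intro: msum_hom)
  show ?case using Cons h by (simp add: hom_iff smul_madd)
qed

lemma cmp_msum_left: "f \<in> Hom C W X \<Longrightarrow> Y \<in> Obj C \<Longrightarrow>
    (\<And>x. x \<in> set xs \<Longrightarrow> F x \<in> Hom C X Y) \<Longrightarrow>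
   cmp C (msum X Y xs F) f = msum W Y xs (\<lambda>x. cmp C (F x) f)"
proof (induction xs)
  case Nil
  then show ?case by (simp add: hom_iff)
next
  case (Cons x xs)
  have h: "F x \<in> Hom C X Y" "msum X Y xs F \<in> Hom C X Y"
    using Cons hom_objects by (auto intro: msum_hom)
  show ?case using Cons h by (simp add: hom_iff cmp_madd_left)
qed

lemma cmp_msum_right: "g \<in> Hom C Y Z \<Longrightarrow> X \<in> Obj C \<Longrightarrow>
    (\<And>x. x \<in> set xs \<Longrightarrow> F x \<in> Hom C X Y) \<Longrightarrow>
   cmp C g (msum X Y xs F) = msum X Z xs (\<lambda>x. cmp C g (F x))"
proof (induction xs)
  case Nil
  then show ?case by (simp add: hom_iff)
next
  case (Cons x xs)
  have h: "F x \<in> Hom C X Y" "msum X Y xs F \<in> Hom C X Y"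
    using Cons hom_objects by (auto intro: msum_hom)
  show ?case using Cons h by (simp add: hom_iff cmp_madd_right)
qed

lemma msum_single: "X \<in> Obj C \<Longrightarrow> Y \<in> Obj C \<Longrightarrow>
    distinct xs \<Longrightarrow> x0 \<in> set xs \<Longrightarrow>
    (\<And>x. x \<in> set xs \<Longrightarrow> F x \<in> Hom C X Y) \<Longrightarrow>
   (\<And>x. x \<in> set xs \<Longrightarrow> x \<noteq> x0 \<Longrightarrow> F x = mzero C X Y) \<Longrightarrow> msum X Y xs F = F x0"
proof (induction xs)
  case Nil
  then show ?case by simp
next
  case (Cons x xs)
  show ?case
  proof (cases "x = x0")
    case True
    hence "msum X Y xs F = mzero C X Y" using Cons by (intro msum_zero) auto
    then show ?thesis using True Cons by (simp add: hom_iff)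
  next
    case False
    hence "msum X Y xs F = F x0" using Cons by simp
    then show ?thesis using False Cons by (simp add: hom_iff)
  qed
qed

lemma msum_concat: "X \<in> Obj C \<Longrightarrow> Y \<in> Obj C \<Longrightarrow>
    (\<And>x. x \<in> set (concat (map G ys)) \<Longrightarrow> F x \<in> Hom C X Y) \<Longrightarrow>
  msum X Y (concat (map G ys)) F = msum X Y ys (\<lambda>y. msum X Y (G y) F)"
proof (induction ys)
  case Nil
  then show ?case by simp
next
  case (Cons y ys)
  have "msum X Y (concat (map G ys)) F = msum X Y ys (\<lambda>y. msum X Y (G y) F)"
    using Cons.prems by (intro Cons.IH) auto
  moreover have "msum X Y (G y @ concat (map G ys)) F = madd C (msum X Y (G y) F) (msum X Y (concat (map G ys)) F)"
    using Cons.prems by (intro msum_append) auto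
  ultimately show ?case by simp
qed

lemma msum_map: "msum X Y (map h xs) F = msum X Y xs (\<lambda>x. F (h x))"
  by (simp add: msum_def comp_def)

lemma msum_swap: "X \<in> Obj C \<Longrightarrow> Y \<in> Obj C \<Longrightarrow>
    (\<And>x y. x \<in> set xs \<Longrightarrow> y \<in> set ys \<Longrightarrow>
    F x y \<in> Hom C X Y) \<Longrightarrow>
  msum X Y xs (\<lambda>x. msum X Y ys (\<lambda>y. F x y)) = msum X Y ys (\<lambda>y. msum X Y xs (\<lambda>x. F x y))"
proof (induction xs)
  case Nil
  then show ?case by (simp add: msum_zero)
next
  case (Cons x xs)
  have "msum X Y (x # xs) (\<lambda>x. msum X Y ys (F x)) = madd C (msum X Y ys (F x)) (msum X Y ys (\<lambda>y. msum X Y xs (\<lambda>x. F x y)))"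
    using Cons by simp
  also have "\<dots> = msum X Y ys (\<lambda>y. madd C (F x y) (msum X Y xs (\<lambda>x. F x y)))"
    using Cons by (intro msum_madd[symmetric]) (auto intro!: msum_hom)
  finally show ?case by simp
qed

lemma lincomb_msum: "length cs = length fs \<Longrightarrow>
   lincomb C X Y cs fs = msum X Y [0..<length fs] (\<lambda>j. smul C (cs ! j) (fs ! j))"
proof -
  assume l: "length cs = length fs"
  have "map (\<lambda>(c, f). smul C c f) (zip cs fs) = map (\<lambda>j. smul C (cs ! j) (fs ! j)) [0..<length fs]"
    using l by (intro nth_equalityI) auto
  thus ?thesis by (simp add: lincomb_def msum_def)
qed

lemma madd_swap: "arr a \<Longrightarrow> arr b \<Longrightarrow> arr c \<Longrightarrow>
    arr d \<Longrightarrow> src b = src a \<Longrightarrow> tgt b = tgt a \<Longrightarrow>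
    src c = src a \<Longrightarrow> tgt c = tgt a
  \<Longrightarrow> src d = src a \<Longrightarrow> tgt d = tgt a \<Longrightarrow> madd C (madd C a b) (madd C c d) = madd C (madd C a c) (madd C b d)"
proof -
  assume h: "arr a" "arr b" "arr c" "arr d" "src b = src a" "tgt b = tgt a" "src c = src a" "tgt c = tgt a" "src d = src a" "tgt d = tgt a"
  have "madd C (madd C a b) (madd C c d) = madd C a (madd C b (madd C c d))" using h by (intro madd_assoc) auto
  also have "madd C b (madd C c d) = madd C c (madd C b d)" using h by (intro madd_left_comm) auto
  also have "madd C a (madd C c (madd C b d)) = madd C (madd C a c) (madd C b d)" using h by (intro madd_assoc[symmetric]) auto
  finally show ?thesis .
qed

lemma smul_diff_scalar: "arr x \<Longrightarrow> smul C (a - b) x = msub C (smul C a x) (smul C b x)"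
proof -
  assume x: "arr x"
  have "smul C (a - b) x = smul C (a + (- 1) * b) x" by simp
  also have "\<dots> = madd C (smul C a x) (smul C ((- 1) * b) x)" using x by (rule smul_add_scalar)
  also have "smul C ((- 1) * b) x = mneg C (smul C b x)" using x by (simp add: mneg_def)
  finally show ?thesis by (simp add: msub_def)
qed

lemma msum_msub:
  assumes "X \<in> Obj C" "Y \<in> Obj C"
    and "\<And>x. x \<in> set xs \<Longrightarrow> F x \<in> Hom C X Y" "\<And>x. x \<in> set xs \<Longrightarrow> G x \<in> Hom C X Y"
  shows "msum X Y xs (\<lambda>x. msub C (F x) (G x)) = msub C (msum X Y xs F) (msum X Y xs G)"
  using assms
proof (induction xs)
  case (Cons y xs)
  have h: "F y \<in> Hom C X Y" "G y \<in> Hom C X Y" "msum X Y xs F \<in> Hom C X Y" "msum X Y xs G \<in> Hom C X Y"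
    using Cons.prems by (auto intro: msum_hom)
  have "msum X Y (y # xs) (\<lambda>x. msub C (F x) (G x))
      = madd C (msub C (F y) (G y)) (msub C (msum X Y xs F) (msum X Y xs G))"
    using Cons by simp
  also have "\<dots> = msub C (madd C (F y) (msum X Y xs F)) (madd C (G y) (msum X Y xs G))"
    unfolding msub_def using h by (subst mneg_madd) (auto simp: hom_iff intro!: madd_swap)
  finally show ?case by simp
qed simp

lemma iso_hom: "is_iso C X Y f \<Longrightarrow> f \<in> Hom C X Y" by (simp add: is_iso_def)

lemma iso_id: "X \<in> Obj C \<Longrightarrow> is_iso C X X (idt C X)"
  unfolding is_iso_def by (rule conjI, simp add: id_hom, rule bexI[of _ "idt C X"]) (auto simp: id_hom)

lemma iso_intro: "f \<in> Hom C X Y \<Longrightarrow> g \<in> Hom C Y X \<Longrightarrow>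
    h \<in> Hom C Y X \<Longrightarrow>
   cmp C g f = idt C X \<Longrightarrow> cmp C f h = idt C Y \<Longrightarrow> is_iso C X Y f"
proof -
  assume a: "f \<in> Hom C X Y" "g \<in> Hom C Y X" "h \<in> Hom C Y X" "cmp C g f = idt C X" "cmp C f h = idt C Y"
  have "g = cmp C g (cmp C f h)" using a by (simp add: hom_iff)
  also have "\<dots> = cmp C (cmp C g f) h" using a(1-3) by (simp add: hom_iff cmp_assoc)
  also have "\<dots> = h" using a by (simp add: hom_iff)
  finally have "g = h" .
  thus ?thesis using a unfolding is_iso_def by blast
qed

lemma iso_cmp: "is_iso C X Y a \<Longrightarrow> is_iso C Y Z b \<Longrightarrow> is_iso C X Z (cmp C b a)"
proof -
  assume a: "is_iso C X Y a" "is_iso C Y Z b"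
  obtain a' where a': "a' \<in> Hom C Y X" "cmp C a' a = idt C X" "cmp C a a' = idt C Y" using a is_iso_def by metis
  obtain b' where b': "b' \<in> Hom C Z Y" "cmp C b' b = idt C Y" "cmp C b b' = idt C Z" using a is_iso_def by metis
  have h: "a \<in> Hom C X Y" "b \<in> Hom C Y Z" using a iso_hom by auto
  have "cmp C (cmp C a' b') (cmp C b a) = cmp C a' (cmp C (cmp C b' b) a)"
    using a'(1) b'(1) h by (simp add: hom_iff cmp_assoc)
  also have "\<dots> = idt C X" using a' b' h by (simp add: hom_iff)
  finally have 1: "cmp C (cmp C a' b') (cmp C b a) = idt C X" .
  have "cmp C (cmp C b a) (cmp C a' b') = cmp C b (cmp C (cmp C a a') b')"
    using a'(1) b'(1) h by (simp add: hom_iff cmp_assoc)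
  also have "\<dots> = idt C Z" using a' b' h by (simp add: hom_iff)
  finally have 2: "cmp C (cmp C b a) (cmp C a' b') = idt C Z" .
  show ?thesis using 1 2 a' b' h
    by (intro iso_intro[of _ _ _ "cmp C a' b'" "cmp C a' b'"]) (auto intro: cmp_hom)
qed

lemma iso_inverse: "is_iso C X Y f \<Longrightarrow>
    \<exists>g. g \<in> Hom C Y X \<and> cmp C g f = idt C X \<and> cmp C f g = idt C Y \<and> is_iso C Y X g"
proof -
  assume a: "is_iso C X Y f"
  then obtain g where g: "g \<in> Hom C Y X" "cmp C g f = idt C X" "cmp C f g = idt C Y" using is_iso_def by metis
  have "is_iso C Y X g" using g a iso_hom by (intro iso_intro[of _ _ _ f f]) auto
  thus ?thesis using g by blast
qed

lemma iso_cancel_left: "is_iso C Y Z b \<Longrightarrow> f \<in> Hom C X Y \<Longrightarrow>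
    f' \<in> Hom C X Y \<Longrightarrow> cmp C b f = cmp C b f' \<Longrightarrow> f = f'"
proof -
  assume a: "is_iso C Y Z b" "f \<in> Hom C X Y" "f' \<in> Hom C X Y" "cmp C b f = cmp C b f'"
  obtain b' where b': "b' \<in> Hom C Z Y" "cmp C b' b = idt C Y" using a is_iso_def by metis
  have h: "b \<in> Hom C Y Z" using a iso_hom by auto
  have "f = cmp C (cmp C b' b) f" using a b' by (simp add: hom_iff)
  also have "\<dots> = cmp C b' (cmp C b f)" using a(2) b'(1) h by (simp add: hom_iff cmp_assoc)
  also have "\<dots> = cmp C b' (cmp C b f')" using a by simp
  also have "\<dots> = cmp C (cmp C b' b) f'" using a(3) b'(1) h by (simp add: hom_iff cmp_assoc)
  also have "\<dots> = f'" using a b' by (simp add: hom_iff)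
  finally show ?thesis .
qed

section \<open>The Jacobson radical\<close>

lemma in_jac_rad_iff: "f \<in> jac_rad C X Y \<longleftrightarrow> f \<in> Hom C X Y \<and> (\<forall>g\<in>Hom C Y X. is_iso C X X (msub C (idt C X) (cmp C g f)))"
  by (simp add: jac_rad_def)

lemma jac_rad_hom: "f \<in> jac_rad C X Y \<Longrightarrow> f \<in> Hom C X Y" by (simp add: in_jac_rad_iff)

text \<open>The inverse of \<open>1 - ab\<close> is \<open>1 + a v b\<close>, where \<open>v\<close> is the inverse of \<open>1 - ba\<close>.\<close>

lemma iso_one_minus_cmp_swap:
  assumes a: "a \<in> Hom C X Y" and b: "b \<in> Hom C Y X"
    and u: "is_iso C X X (msub C (idt C X) (cmp C b a))"
  shows "is_iso C Y Y (msub C (idt C Y) (cmp C a b))"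
proof -
  obtain v where v: "v \<in> Hom C X X" "cmp C v (msub C (idt C X) (cmp C b a)) = idt C X"
     "cmp C (msub C (idt C X) (cmp C b a)) v = idt C X"
    using u is_iso_def by metis
  have X: "X \<in> Obj C" and Y: "Y \<in> Obj C" using a hom_objects by auto
  note hs = a b v(1) id_hom[OF X] id_hom[OF Y]
  have "msub C v (cmp C (cmp C b a) v) = idt C X"
    using v(3) hs by (simp add: hom_iff cmp_msub_left)
  hence v1: "v = madd C (cmp C (cmp C b a) v) (idt C X)"
    using hs by (subst (asm) msub_eq_iff) (auto simp: hom_iff)
  have "msub C v (cmp C v (cmp C b a)) = idt C X"
    using v(2) hs by (simp add: hom_iff cmp_msub_right)
  hence v2: "v = madd C (cmp C v (cmp C b a)) (idt C X)"
    using hs by (subst (asm) msub_eq_iff) (auto simp: hom_iff)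
  define w where "w = madd C (idt C Y) (cmp C a (cmp C v b))"
  have avb: "cmp C a (cmp C v b) \<in> Hom C Y Y" using hs by (auto intro!: cmp_hom)
  have w: "w \<in> Hom C Y Y" unfolding w_def using hs avb by (auto intro!: madd_hom)
  have e1: "cmp C a (cmp C v b) = madd C (cmp C (cmp C a b) (cmp C a (cmp C v b))) (cmp C a b)"
  proof -
    have "cmp C a (cmp C v b) = cmp C a (cmp C (madd C (cmp C (cmp C b a) v) (idt C X)) b)"
      using v1 by simp
    also have "\<dots> = madd C (cmp C (cmp C a b) (cmp C a (cmp C v b))) (cmp C a b)"
      using hs by (simp add: hom_iff cmp_madd_left cmp_madd_right cmp_assoc)
    finally show ?thesis .
  qed
  have e2: "cmp C a (cmp C v b) = madd C (cmp C (cmp C a (cmp C v b)) (cmp C a b)) (cmp C a b)"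
  proof -
    have "cmp C a (cmp C v b) = cmp C a (cmp C (madd C (cmp C v (cmp C b a)) (idt C X)) b)"
      using v2 by simp
    also have "\<dots> = madd C (cmp C (cmp C a (cmp C v b)) (cmp C a b)) (cmp C a b)"
      using hs by (simp add: hom_iff cmp_madd_left cmp_madd_right cmp_assoc)
    finally show ?thesis .
  qed
  have ab: "cmp C a b \<in> Hom C Y Y" using hs by (auto intro: cmp_hom)
  have l: "cmp C w (msub C (idt C Y) (cmp C a b)) = idt C Y"
  proof -
    have "cmp C w (msub C (idt C Y) (cmp C a b)) = msub C w (cmp C w (cmp C a b))"
      using w ab hs by (simp add: hom_iff cmp_msub_right)
    also have "cmp C w (cmp C a b) = madd C (cmp C a b) (cmp C (cmp C a (cmp C v b)) (cmp C a b))"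
      unfolding w_def using ab avb hs by (simp add: hom_iff cmp_madd_left)
    finally have "cmp C w (msub C (idt C Y) (cmp C a b)) = msub C w (madd C (cmp C a b) (cmp C (cmp C a (cmp C v b)) (cmp C a b)))" .
    also have "madd C (cmp C a b) (cmp C (cmp C a (cmp C v b)) (cmp C a b)) = cmp C a (cmp C v b)"
      using e2 ab avb hs by (simp add: hom_iff madd_comm)
    also have "msub C w (cmp C a (cmp C v b)) = idt C Y"
      using ab avb hs by (subst msub_eq_iff) (auto simp: hom_iff w_def madd_comm)
    finally show ?thesis .
  qed
  have r: "cmp C (msub C (idt C Y) (cmp C a b)) w = idt C Y"
  proof -
    have "cmp C (msub C (idt C Y) (cmp C a b)) w = msub C w (cmp C (cmp C a b) w)"
      using w ab hs by (simp add: hom_iff cmp_msub_left)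
    also have "cmp C (cmp C a b) w = madd C (cmp C a b) (cmp C (cmp C a b) (cmp C a (cmp C v b)))"
      unfolding w_def using ab avb hs by (simp add: hom_iff cmp_madd_right)
    finally have "cmp C (msub C (idt C Y) (cmp C a b)) w = msub C w (madd C (cmp C a b) (cmp C (cmp C a b) (cmp C a (cmp C v b))))" .
    also have "madd C (cmp C a b) (cmp C (cmp C a b) (cmp C a (cmp C v b))) = cmp C a (cmp C v b)"
      using e1 ab avb hs by (simp add: hom_iff madd_comm)
    also have "msub C w (cmp C a (cmp C v b)) = idt C Y"
      using ab avb hs by (subst msub_eq_iff) (auto simp: hom_iff w_def madd_comm)
    finally show ?thesis .
  qed
  show ?thesis using l r w ab hs by (intro iso_intro[of _ _ _ w w]) (auto intro: madd_hom simp: msub_def mneg_def smul_hom)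
qed

lemma zero_in_jac_rad: "X \<in> Obj C \<Longrightarrow> Y \<in> Obj C \<Longrightarrow>
    mzero C X Y \<in> jac_rad C X Y"
  unfolding in_jac_rad_iff using zero_hom iso_id by (auto simp: hom_iff)

lemma cmp_jac_rad_left: "f \<in> jac_rad C X Y \<Longrightarrow>
    h \<in> Hom C Y Z \<Longrightarrow> cmp C h f \<in> jac_rad C X Z"
proof -
  assume a: "f \<in> jac_rad C X Y" "h \<in> Hom C Y Z"
  have f: "f \<in> Hom C X Y" using a jac_rad_hom by auto
  show ?thesis unfolding in_jac_rad_iff
  proof (intro conjI ballI)
    show "cmp C h f \<in> Hom C X Z" using f a(2) by (rule cmp_hom)
    fix g assume g: "g \<in> Hom C Z X"
    have "cmp C g (cmp C h f) = cmp C (cmp C g h) f" using f g a by (simp add: hom_iff cmp_assoc)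
    moreover have "cmp C g h \<in> Hom C Y X" using g a cmp_hom by blast
    ultimately show "is_iso C X X (msub C (idt C X) (cmp C g (cmp C h f)))" using a in_jac_rad_iff by simp
  qed
qed

lemma cmp_jac_rad_right: "f \<in> jac_rad C X Y \<Longrightarrow>
    k \<in> Hom C W X \<Longrightarrow> cmp C f k \<in> jac_rad C W Y"
proof -
  assume a: "f \<in> jac_rad C X Y" "k \<in> Hom C W X"
  have f: "f \<in> Hom C X Y" using a jac_rad_hom by auto
  show ?thesis unfolding in_jac_rad_iff
  proof (intro conjI ballI)
    show "cmp C f k \<in> Hom C W Y" using f a cmp_hom by blast
    fix g assume g: "g \<in> Hom C Y W"
    have kg: "cmp C k g \<in> Hom C Y X" using g a cmp_hom by blast
    have "is_iso C X X (msub C (idt C X) (cmp C (cmp C k g) f))" using a kg in_jac_rad_iff by blast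
    moreover have "cmp C (cmp C k g) f = cmp C k (cmp C g f)" using f g a by (simp add: hom_iff cmp_assoc)
    ultimately have "is_iso C X X (msub C (idt C X) (cmp C k (cmp C g f)))" by simp
    moreover have "cmp C g f \<in> Hom C X W" using f g cmp_hom by blast
    ultimately have "is_iso C W W (msub C (idt C W) (cmp C (cmp C g f) k))"
      using iso_one_minus_cmp_swap[of "cmp C g f" X W k] a by blast
    moreover have "cmp C (cmp C g f) k = cmp C g (cmp C f k)" using f g a by (simp add: hom_iff cmp_assoc)
    ultimately show "is_iso C W W (msub C (idt C W) (cmp C g (cmp C f k)))" by simp
  qed
qed

lemma madd_in_jac_rad: "f1 \<in> jac_rad C X Y \<Longrightarrow>
    f2 \<in> jac_rad C X Y \<Longrightarrow> madd C f1 f2 \<in> jac_rad C X Y"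
proof -
  assume a: "f1 \<in> jac_rad C X Y" "f2 \<in> jac_rad C X Y"
  have f: "f1 \<in> Hom C X Y" "f2 \<in> Hom C X Y" using a jac_rad_hom by auto
  have X: "X \<in> Obj C" using f hom_objects by blast
  show ?thesis unfolding in_jac_rad_iff
  proof (intro conjI ballI)
    show "madd C f1 f2 \<in> Hom C X Y" using f madd_hom by blast
    fix g assume g: "g \<in> Hom C Y X"
    \<comment> \<open>\<open>1 - g (f1 + f2) = u (1 - u\<inverse> g f2)\<close> with \<open>u = 1 - g f1\<close> invertible\<close>
    define u where "u = msub C (idt C X) (cmp C g f1)"
    have u: "is_iso C X X u" unfolding u_def using a(1) g in_jac_rad_iff by blast
    then obtain u' where u': "u' \<in> Hom C X X" "cmp C u u' = idt C X" using is_iso_def by metis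
    have uh: "u \<in> Hom C X X" using u iso_hom by blast
    have ug: "cmp C u' g \<in> Hom C Y X" using u' g cmp_hom by blast
    have i2: "is_iso C X X (msub C (idt C X) (cmp C (cmp C u' g) f2))" using a ug in_jac_rad_iff by blast
    have e1: "cmp C u (msub C (idt C X) (cmp C (cmp C u' g) f2)) = msub C u (cmp C u (cmp C (cmp C u' g) f2))"
      using uh ug f X by (simp add: hom_iff cmp_msub_right)
    have e2: "cmp C u (cmp C (cmp C u' g) f2) = cmp C (cmp C u u') (cmp C g f2)"
      using uh u'(1) g f by (simp add: hom_iff cmp_assoc)
    have e3: "cmp C (cmp C u u') (cmp C g f2) = cmp C g f2" using u' g f by (simp add: hom_iff)
    have e4: "msub C u (cmp C g f2) = msub C (idt C X) (madd C (cmp C g f1) (cmp C g f2))"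
      unfolding u_def using g f X by (intro msub_msub) (auto simp: hom_iff)
    have e5: "madd C (cmp C g f1) (cmp C g f2) = cmp C g (madd C f1 f2)"
      using g f by (intro cmp_madd_right[symmetric]) (auto simp: hom_iff)
    have "cmp C u (msub C (idt C X) (cmp C (cmp C u' g) f2)) = msub C (idt C X) (cmp C g (madd C f1 f2))"
      unfolding e1 e2 e3 e4 e5 ..
    moreover have "is_iso C X X (cmp C u (msub C (idt C X) (cmp C (cmp C u' g) f2)))"
      using iso_cmp[OF i2 u] .
    ultimately show "is_iso C X X (msub C (idt C X) (cmp C g (madd C f1 f2)))" by simp
  qed
qed

lemma smul_in_jac_rad: "f \<in> jac_rad C X Y \<Longrightarrow> smul C c f \<in> jac_rad C X Y"
proof -
  assume a: "f \<in> jac_rad C X Y"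
  have f: "f \<in> Hom C X Y" using a jac_rad_hom by auto
  have Y: "Y \<in> Obj C" using f hom_objects by blast
  have "cmp C (smul C c (idt C Y)) f \<in> jac_rad C X Y" using a Y by (intro cmp_jac_rad_left) (auto intro: smul_hom id_hom)
  thus ?thesis using f Y by (simp add: hom_iff)
qed

lemma mneg_in_jac_rad: "f \<in> jac_rad C X Y \<Longrightarrow> mneg C f \<in> jac_rad C X Y"
  unfolding mneg_def by (rule smul_in_jac_rad)

lemma msum_in_jac_rad: "X \<in> Obj C \<Longrightarrow> Y \<in> Obj C \<Longrightarrow>
    (\<And>x. x \<in> set xs \<Longrightarrow> F x \<in> jac_rad C X Y) \<Longrightarrow>
    msum X Y xs F \<in> jac_rad C X Y"
  by (induction xs) (auto intro: zero_in_jac_rad madd_in_jac_rad)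

lemma iso_id_plus_jac_rad: "r \<in> jac_rad C X X \<Longrightarrow> is_iso C X X (madd C (idt C X) r)"
proof -
  assume r: "r \<in> jac_rad C X X"
  have rh: "r \<in> Hom C X X" using r jac_rad_hom by blast
  have X: "X \<in> Obj C" using rh hom_objects by blast
  have "is_iso C X X (msub C (idt C X) (cmp C (idt C X) (mneg C r)))"
    using mneg_in_jac_rad[OF r] X id_hom in_jac_rad_iff by blast
  moreover have "msub C (idt C X) (cmp C (idt C X) (mneg C r)) = madd C (idt C X) r"
    using rh X by (simp add: hom_iff msub_def)
  ultimately show ?thesis by simp
qed

section \<open>Objects with local endomorphism ring\<close>

lemma local_end_obj: "local_end C A \<Longrightarrow> A \<in> Obj C" by (simp add: local_end_def)
lemma local_end_id_nonzero: "local_end C A \<Longrightarrow>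
    idt C A \<noteq> mzero C A A" by (simp add: local_end_def)

lemma local_end_sum_id: "local_end C A \<Longrightarrow> a \<in> Hom C A A \<Longrightarrow>
    b \<in> Hom C A A \<Longrightarrow> madd C a b = idt C A \<Longrightarrow>
   is_iso C A A a \<or> is_iso C A A b"
  unfolding local_end_def using iso_id by metis

lemma local_end_idempotent: "local_end C A \<Longrightarrow> e \<in> Hom C A A \<Longrightarrow>
    cmp C e e = e \<Longrightarrow> e = idt C A \<or> e = mzero C A A"
proof -
  assume a: "local_end C A" "e \<in> Hom C A A" "cmp C e e = e"
  have A: "A \<in> Obj C" using a local_end_obj by blast
  have oe: "msub C (idt C A) e \<in> Hom C A A" using a A by (simp add: hom_iff)
  have "madd C e (msub C (idt C A) e) = idt C A"
    using a A by (intro madd_msub_cancel) (auto simp: hom_iff)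
  hence "is_iso C A A e \<or> is_iso C A A (msub C (idt C A) e)" using local_end_sum_id[OF a(1) a(2) oe] by blast
  thus ?thesis
  proof
    assume i: "is_iso C A A e"
    have "cmp C e e = cmp C e (idt C A)" using a by (simp add: hom_iff)
    hence "e = idt C A" using iso_cancel_left[OF i a(2), of "idt C A"] A id_hom by blast
    thus ?thesis ..
  next
    assume i: "is_iso C A A (msub C (idt C A) e)"
    have "cmp C (msub C (idt C A) e) e = msub C e (cmp C e e)" using a A by (simp add: hom_iff cmp_msub_left)
    also have "\<dots> = mzero C A A" using a by (simp add: hom_iff)
    also have "\<dots> = cmp C (msub C (idt C A) e) (mzero C A A)" using oe A by (simp add: hom_iff)
    finally have "e = mzero C A A" using iso_cancel_left[OF i a(2), of "mzero C A A"] A zero_hom by blast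
    thus ?thesis ..
  qed
qed

lemma local_end_left_inverse_iso: "local_end C A \<Longrightarrow>
    x \<in> Hom C A A \<Longrightarrow> y \<in> Hom C A A \<Longrightarrow>
    cmp C y x = idt C A \<Longrightarrow> is_iso C A A x"
proof -
  assume a: "local_end C A" "x \<in> Hom C A A" "y \<in> Hom C A A" "cmp C y x = idt C A"
  have A: "A \<in> Obj C" using a local_end_obj by blast
  have eh: "cmp C x y \<in> Hom C A A" using a cmp_hom by blast
  have "cmp C (cmp C x y) (cmp C x y) = cmp C x (cmp C (cmp C y x) y)" using a(2,3) by (simp add: hom_iff cmp_assoc)
  also have "\<dots> = cmp C x y" using a by (simp add: hom_iff)
  finally have "cmp C x y = idt C A \<or> cmp C x y = mzero C A A" using local_end_idempotent[OF a(1) eh] by blast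
  thus ?thesis
  proof
    assume xy: "cmp C x y = idt C A"
    show ?thesis by (rule iso_intro[OF a(2) a(3) a(3) a(4) xy])
  next
    assume e0: "cmp C x y = mzero C A A"
    have "x = cmp C x (cmp C y x)" using a by (simp add: hom_iff)
    also have "\<dots> = cmp C (cmp C x y) x" using a(2,3) by (simp add: hom_iff cmp_assoc)
    also have "\<dots> = mzero C A A" using e0 a A by (simp add: hom_iff)
    finally have "idt C A = mzero C A A" using a A by (simp add: hom_iff)
    thus ?thesis using a local_end_id_nonzero by blast
  qed
qed

lemma local_end_non_iso_in_jac_rad: "local_end C A \<Longrightarrow>
    e \<in> Hom C A A \<Longrightarrow> \<not> is_iso C A A e \<Longrightarrow> e \<in> jac_rad C A A"
proof -
  assume a: "local_end C A" "e \<in> Hom C A A" "\<not> is_iso C A A e"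
  have A: "A \<in> Obj C" using a local_end_obj by blast
  show ?thesis unfolding in_jac_rad_iff
  proof (intro conjI ballI)
    show "e \<in> Hom C A A" by fact
    fix g assume g: "g \<in> Hom C A A"
    have ge: "cmp C g e \<in> Hom C A A" using a g cmp_hom by blast
    have ni: "\<not> is_iso C A A (cmp C g e)"
    proof
      assume "is_iso C A A (cmp C g e)"
      then obtain v where v: "v \<in> Hom C A A" "cmp C v (cmp C g e) = idt C A" using is_iso_def by metis
      have "cmp C (cmp C v g) e = idt C A" using v g a by (simp add: hom_iff cmp_assoc)
      hence "is_iso C A A e" using local_end_left_inverse_iso[OF a(1) a(2), of "cmp C v g"] v g cmp_hom by blast
      thus False using a by blast
    qed
    have oe: "msub C (idt C A) (cmp C g e) \<in> Hom C A A" using ge A by (simp add: hom_iff)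
    have "madd C (cmp C g e) (msub C (idt C A) (cmp C g e)) = idt C A"
      using ge A by (intro madd_msub_cancel) (auto simp: hom_iff)
    thus "is_iso C A A (msub C (idt C A) (cmp C g e))" using local_end_sum_id[OF a(1) ge oe] ni by blast
  qed
qed

lemma hom_in_jac_rad_if_not_isomorphic:
  assumes la: "local_end C A" and lb: "local_end C B" and ni: "\<not> isomorphic C B A" and a: "a \<in> Hom C B A"
  shows "a \<in> jac_rad C B A"
  unfolding in_jac_rad_iff
proof (intro conjI ballI)
  show "a \<in> Hom C B A" by fact
  have A: "A \<in> Obj C" and B: "B \<in> Obj C" using la lb local_end_obj by auto
  fix g assume g: "g \<in> Hom C A B"
  have ga: "cmp C g a \<in> Hom C B B" using a g cmp_hom by blast
  have nga: "\<not> is_iso C B B (cmp C g a)"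
  proof
    assume "is_iso C B B (cmp C g a)"
    then obtain v where v: "v \<in> Hom C B B" "cmp C v (cmp C g a) = idt C B" using is_iso_def by metis
    define y where "y = cmp C v g"
    have y: "y \<in> Hom C A B" using v g cmp_hom y_def by blast
    have ya: "cmp C y a = idt C B" using v g a unfolding y_def by (simp add: hom_iff cmp_assoc)
    have eh: "cmp C a y \<in> Hom C A A" using a y cmp_hom by blast
    have "cmp C (cmp C a y) (cmp C a y) = cmp C a (cmp C (cmp C y a) y)" using a y by (simp add: hom_iff cmp_assoc)
    also have "\<dots> = cmp C a y" using ya a y by (simp add: hom_iff)
    finally have "cmp C a y = idt C A \<or> cmp C a y = mzero C A A" using local_end_idempotent[OF la eh] by blast
    thus False
    proof
      assume ay: "cmp C a y = idt C A"
      have "is_iso C B A a" by (rule iso_intro[OF a y y ya ay])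
      hence "isomorphic C B A" unfolding isomorphic_def by (rule exI)
      thus False using ni by simp
    next
      assume e0: "cmp C a y = mzero C A A"
      have "a = cmp C a (cmp C y a)" using a ya by (simp add: hom_iff)
      also have "\<dots> = cmp C (cmp C a y) a" using a y by (simp add: hom_iff cmp_assoc)
      also have "\<dots> = mzero C B A" using e0 a A by (simp add: hom_iff)
      finally have "idt C B = cmp C y (mzero C B A)" using ya by simp
      also have "\<dots> = mzero C B B" using y B by (simp add: hom_iff)
      finally show False using lb local_end_id_nonzero by blast
    qed
  qed
  have "cmp C g a \<in> jac_rad C B B" using local_end_non_iso_in_jac_rad[OF lb ga nga] .
  hence "is_iso C B B (msub C (idt C B) (cmp C (idt C B) (cmp C g a)))" using in_jac_rad_iff B id_hom by blast
  thus "is_iso C B B (msub C (idt C B) (cmp C g a))" using ga by (simp add: hom_iff)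
qed

lemma is_biproductD:
  assumes "is_biproduct C idx A Y \<iota> \<pi>"
  shows "Y \<in> Obj C" "distinct idx"
    "\<And>a. a \<in> set idx \<Longrightarrow> A a \<in> Obj C" "\<And>a. a \<in> set idx \<Longrightarrow> \<iota> a \<in> Hom C (A a) Y"
    "\<And>a. a \<in> set idx \<Longrightarrow> \<pi> a \<in> Hom C Y (A a)"
    "\<And>a b. a \<in> set idx \<Longrightarrow> b \<in> set idx \<Longrightarrow> cmp C (\<pi> a) (\<iota> b) = (if a = b then idt C (A a) else mzero C (A b) (A a))"
    "msum Y Y idx (\<lambda>a. cmp C (\<iota> a) (\<pi> a)) = idt C Y"
  using assms unfolding is_biproduct_def msum_def by auto

lemma is_biproduct_uptD:
  assumes "is_biproduct C [0..<n] A Y \<iota> \<pi>"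
  shows "\<And>a. a < n \<Longrightarrow> A a \<in> Obj C" "\<And>a. a < n \<Longrightarrow> \<iota> a \<in> Hom C (A a) Y"
    "\<And>a. a < n \<Longrightarrow> \<pi> a \<in> Hom C Y (A a)"
    "\<And>a b. a < n \<Longrightarrow> b < n \<Longrightarrow> cmp C (\<pi> a) (\<iota> b) = (if a = b then idt C (A a) else mzero C (A b) (A a))"
  using is_biproductD(3-6)[OF assms] by simp_all

lemma is_biproductI:
  assumes "Y \<in> Obj C" "distinct idx"
    "\<And>a. a \<in> set idx \<Longrightarrow> A a \<in> Obj C" "\<And>a. a \<in> set idx \<Longrightarrow> \<iota> a \<in> Hom C (A a) Y"
    "\<And>a. a \<in> set idx \<Longrightarrow> \<pi> a \<in> Hom C Y (A a)"
    "\<And>a b. a \<in> set idx \<Longrightarrow> b \<in> set idx \<Longrightarrow> cmp C (\<pi> a) (\<iota> b) = (if a = b then idt C (A a) else mzero C (A b) (A a))"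
    "msum Y Y idx (\<lambda>a. cmp C (\<iota> a) (\<pi> a)) = idt C Y"
  shows "is_biproduct C idx A Y \<iota> \<pi>"
  using assms unfolding is_biproduct_def msum_def by auto

lemma retract_zero_obj:
  assumes i: "i \<in> Hom C A Y" and p: "p \<in> Hom C Y A" and pi: "cmp C p i = idt C A"
    and e: "cmp C i p = mzero C Y Y"
  shows "is_zero_obj C A"
proof -
  have A: "A \<in> Obj C" and Y: "Y \<in> Obj C" using i hom_objects by auto
  have "idt C A = cmp C (cmp C p i) (cmp C p i)" using pi A by simp
  also have "\<dots> = cmp C p (cmp C (cmp C i p) i)" using i p by (simp add: hom_iff cmp_assoc)
  also have "\<dots> = mzero C A A" using e i p A Y by (simp add: hom_iff)
  finally show ?thesis unfolding is_zero_obj_def using A by blast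
qed

lemma local_end_indecomposable: "local_end C W \<Longrightarrow> indecomposable C W"
proof -
  assume l: "local_end C W"
  have W: "W \<in> Obj C" using l local_end_obj by blast
  have nz: "\<not> is_zero_obj C W" using l local_end_id_nonzero unfolding is_zero_obj_def by blast
  have "is_zero_obj C (A 0) \<or> is_zero_obj C (A 1)" if b: "is_biproduct C [0, 1] A W \<iota> \<pi>" for A and \<iota> \<pi> :: "nat \<Rightarrow> 'm"
  proof -
    note bp = is_biproductD[OF b]
    have h: "\<iota> 0 \<in> Hom C (A 0) W" "\<iota> 1 \<in> Hom C (A 1) W" "\<pi> 0 \<in> Hom C W (A 0)" "\<pi> 1 \<in> Hom C W (A 1)"
      using bp by auto
    have pi: "cmp C (\<pi> 0) (\<iota> 0) = idt C (A 0)" "cmp C (\<pi> 1) (\<iota> 1) = idt C (A 1)" using bp(6)[of 0 0] bp(6)[of 1 1] by auto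
    have e0h: "cmp C (\<iota> 0) (\<pi> 0) \<in> Hom C W W" "cmp C (\<iota> 1) (\<pi> 1) \<in> Hom C W W" using h cmp_hom by blast+
    have sum: "madd C (cmp C (\<iota> 0) (\<pi> 0)) (cmp C (\<iota> 1) (\<pi> 1)) = idt C W"
      using bp(7) e0h W by (simp add: hom_iff)
    have "cmp C (cmp C (\<iota> 0) (\<pi> 0)) (cmp C (\<iota> 0) (\<pi> 0)) = cmp C (\<iota> 0) (cmp C (cmp C (\<pi> 0) (\<iota> 0)) (\<pi> 0))"
      using h by (simp add: hom_iff cmp_assoc)
    also have "\<dots> = cmp C (\<iota> 0) (\<pi> 0)" using pi h by (simp add: hom_iff)
    finally have "cmp C (\<iota> 0) (\<pi> 0) = idt C W \<or> cmp C (\<iota> 0) (\<pi> 0) = mzero C W W"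
      using local_end_idempotent[OF l e0h(1)] by blast
    thus ?thesis
    proof
      assume e: "cmp C (\<iota> 0) (\<pi> 0) = idt C W"
      have z: "madd C (idt C W) (mzero C W W) = idt C W" using W by simp
      have "madd C (idt C W) (cmp C (\<iota> 1) (\<pi> 1)) = madd C (idt C W) (mzero C W W)"
        unfolding z using sum[unfolded e] .
      hence "cmp C (\<iota> 1) (\<pi> 1) = mzero C W W"
        using e0h(2) W by (rule_tac madd_left_cancel[of "idt C W"]) (simp_all add: hom_iff)
      thus ?thesis using retract_zero_obj[OF h(2) h(4) pi(2)] by blast
    next
      assume e: "cmp C (\<iota> 0) (\<pi> 0) = mzero C W W"
      thus ?thesis using retract_zero_obj[OF h(1) h(3) pi(1)] by blast
    qed
  qed
  thus ?thesis unfolding indecomposable_def using W nz by blast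
qed

lemma local_end_iso:
  assumes l: "local_end C A" and s: "is_iso C A X s"
  shows "local_end C X"
proof -
  obtain t where t: "t \<in> Hom C X A" "cmp C t s = idt C A" "cmp C s t = idt C X" "is_iso C X A t"
    using iso_inverse[OF s] by blast
  have sh: "s \<in> Hom C A X" using s iso_hom by blast
  have A: "A \<in> Obj C" and X: "X \<in> Obj C" using sh hom_objects by auto
  have nz: "idt C X \<noteq> mzero C X X"
  proof
    assume z: "idt C X = mzero C X X"
    have "idt C A = cmp C t (cmp C (idt C X) s)" using t(2) sh t(1) by (simp add: hom_iff)
    also have "\<dots> = cmp C t (cmp C (mzero C X X) s)" using z by simp
    also have "\<dots> = mzero C A A" using sh t(1) A X by (simp add: hom_iff)
    finally show False using l local_end_id_nonzero by blast
  qed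
  have conj_iso: "is_iso C X X a" if a: "a \<in> Hom C X X" "is_iso C A A (cmp C t (cmp C a s))" for a
  proof -
    have "is_iso C X X (cmp C s (cmp C (cmp C t (cmp C a s)) t))"
      using iso_cmp[OF t(4) iso_cmp[OF that(2) s]] sh t a by (simp add: hom_iff cmp_assoc)
    moreover have "cmp C s (cmp C (cmp C t (cmp C a s)) t) = a"
    proof -
      have "cmp C s (cmp C (cmp C t (cmp C a s)) t) = cmp C (cmp C s t) (cmp C a (cmp C s t))"
        using sh t(1) a by (simp add: hom_iff cmp_assoc)
      also have "\<dots> = a" using t(3) a by (simp add: hom_iff)
      finally show ?thesis .
    qed
    ultimately show ?thesis by simp
  qed
  have "\<not> is_iso C X X (madd C a b)" if a: "a \<in> Hom C X X" "b \<in> Hom C X X" "\<not> is_iso C X X a" "\<not> is_iso C X X b" for a b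
  proof
    assume i: "is_iso C X X (madd C a b)"
    have h1: "cmp C t (cmp C a s) \<in> Hom C A A" "cmp C t (cmp C b s) \<in> Hom C A A"
      using a sh t(1) by (meson cmp_hom)+
    have n1: "\<not> is_iso C A A (cmp C t (cmp C a s))" using conj_iso a by blast
    have n2: "\<not> is_iso C A A (cmp C t (cmp C b s))" using conj_iso a by blast
    have "\<not> is_iso C A A (madd C (cmp C t (cmp C a s)) (cmp C t (cmp C b s)))"
      using l h1 n1 n2 unfolding local_end_def by blast
    moreover have "madd C (cmp C t (cmp C a s)) (cmp C t (cmp C b s)) = cmp C t (cmp C (madd C a b) s)"
      using a sh t(1) by (simp add: hom_iff cmp_madd_left cmp_madd_right)
    moreover have "is_iso C A A (cmp C t (cmp C (madd C a b) s))"
      using iso_cmp[OF iso_cmp[OF s i] t(4)] .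
    ultimately show False by simp
  qed
  thus ?thesis unfolding local_end_def using X nz by blast
qed

lemma is_biproduct_cong:
  "(\<And>a. a \<in> set idx \<Longrightarrow> A a = A' a) \<Longrightarrow>
    is_biproduct C idx A Y \<iota> \<pi> \<longleftrightarrow> is_biproduct C idx A' Y \<iota> \<pi>"
  unfolding is_biproduct_def by auto

lemma cmp_msum_diagonal:
  assumes "distinct xs" "X \<in> Obj C" "Y \<in> Obj C" "Z \<in> Obj C"
    and G: "\<And>x. x \<in> set xs \<Longrightarrow> G x \<in> Hom C X Y" and F: "\<And>x. x \<in> set xs \<Longrightarrow> F x \<in> Hom C Y Z"
    and orth: "\<And>x y. x \<in> set xs \<Longrightarrow> y \<in> set xs \<Longrightarrow> x \<noteq> y \<Longrightarrow> cmp C (F x) (G y) = mzero C X Z"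
  shows "cmp C (msum Y Z xs F) (msum X Y xs G) = msum X Z xs (\<lambda>x. cmp C (F x) (G x))"
proof -
  have "cmp C (msum Y Z xs F) (msum X Y xs G) = msum X Z xs (\<lambda>y. cmp C (msum Y Z xs F) (G y))"
    using assms by (intro cmp_msum_right) (auto intro: msum_hom)
  also have "\<dots> = msum X Z xs (\<lambda>y. msum X Z xs (\<lambda>x. cmp C (F x) (G y)))"
    using assms by (intro msum_cong cmp_msum_left) auto
  also have "\<dots> = msum X Z xs (\<lambda>y. cmp C (F y) (G y))"
    using assms by (intro msum_cong msum_single) (auto intro: cmp_hom)
  finally show ?thesis .
qed

lemma biproduct_sandwich:
  assumes b: "is_biproduct C [0..<n] A Y \<iota> \<pi>" and "a < n" "b < n"
    and "h \<in> Hom C W (A b)" and "k \<in> Hom C (A a) Z"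
  shows "cmp C (cmp C k (\<pi> a)) (cmp C (\<iota> b) h) = (if a = b then cmp C k h else mzero C W Z)"
proof -
  note bp = is_biproduct_uptD[OF b]
  have "cmp C (cmp C k (\<pi> a)) (cmp C (\<iota> b) h) = cmp C k (cmp C (cmp C (\<pi> a) (\<iota> b)) h)"
    using assms bp(2,3) by (intro cmp_cmp_middle) auto
  then show ?thesis using assms bp(1,4) by (auto simp: hom_iff)
qed

text \<open>Regrouping \<open>A\<^sub>0 \<oplus> \<dots> \<oplus> A\<^sub>m\<close> as \<open>A\<^sub>0 \<oplus> B\<close>, where \<open>B\<close> is a biproduct of
  \<open>A\<^sub>1, \<dots>, A\<^sub>m\<close>.\<close>

lemma biproduct_split_head:
  assumes bX: "is_biproduct C [0..<Suc m] A X \<iota> \<pi>"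
    and bB: "is_biproduct C [0..<m] (\<lambda>j. A (Suc j)) B \<iota>' \<pi>'"
  defines "\<iota>1 \<equiv> msum B X [0..<m] (\<lambda>j. cmp C (\<iota> (Suc j)) (\<pi>' j))"
    and "\<pi>1 \<equiv> msum X B [0..<m] (\<lambda>j. cmp C (\<iota>' j) (\<pi> (Suc j)))"
  shows "is_biproduct C [0::nat, 1] (\<lambda>a. if a = 0 then A 0 else B) X
           (\<lambda>a. if a = 0 then \<iota> 0 else \<iota>1) (\<lambda>a. if a = 0 then \<pi> 0 else \<pi>1)"
proof -
  note bpX = is_biproduct_uptD[OF bX] and bpB = is_biproduct_uptD[OF bB]
  have Xo: "X \<in> Obj C" and Bo: "B \<in> Obj C" and A0: "A 0 \<in> Obj C"
    using is_biproductD(1)[OF bX] is_biproductD(1)[OF bB] bpX(1) by auto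
  note \<iota> = bpX(2) and \<pi> = bpX(3)
  have \<iota>0: "\<iota> 0 \<in> Hom C (A 0) X" and \<pi>0: "\<pi> 0 \<in> Hom C X (A 0)" using \<iota> \<pi> by auto
  have F: "cmp C (\<iota> (Suc j)) (\<pi>' j) \<in> Hom C B X" and G: "cmp C (\<iota>' j) (\<pi> (Suc j)) \<in> Hom C X B"
    if "j \<in> set [0..<m]" for j
    using that \<iota>[of "Suc j"] \<pi>[of "Suc j"] bpB(2,3)[of j] by (auto intro: cmp_hom[where Y = "A (Suc j)"])
  have \<iota>1: "\<iota>1 \<in> Hom C B X" and \<pi>1: "\<pi>1 \<in> Hom C X B"
    unfolding \<iota>1_def \<pi>1_def using F G Xo Bo by (auto intro: msum_hom)
  have \<pi>0\<iota>1: "cmp C (\<pi> 0) \<iota>1 = mzero C B (A 0)"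
  proof -
    have "cmp C (\<pi> 0) (cmp C (\<iota> (Suc j)) (\<pi>' j)) = mzero C B (A 0)" if "j < m" for j
    proof -
      have "cmp C (\<pi> 0) (\<iota> (Suc j)) = mzero C (A (Suc j)) (A 0)" using bpX(4)[of 0 "Suc j"] that by simp
      then show ?thesis using that \<pi>0 \<iota>[of "Suc j"] bpB(3)[of j] A0 by (simp add: hom_iff flip: cmp_assoc)
    qed
    then show ?thesis unfolding \<iota>1_def using \<pi>0 F Bo A0 by (subst cmp_msum_right) (auto intro: msum_zero)
  qed
  have \<pi>1\<iota>0: "cmp C \<pi>1 (\<iota> 0) = mzero C (A 0) B"
  proof -
    have "cmp C (cmp C (\<iota>' j) (\<pi> (Suc j))) (\<iota> 0) = mzero C (A 0) B" if "j < m" for j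
    proof -
      have "cmp C (\<pi> (Suc j)) (\<iota> 0) = mzero C (A 0) (A (Suc j))" using bpX(4)[of "Suc j" 0] that by simp
      then show ?thesis using that \<iota>0 \<pi>[of "Suc j"] bpB(2)[of j] A0 by (simp add: hom_iff cmp_assoc)
    qed
    then show ?thesis unfolding \<pi>1_def using \<iota>0 G Bo A0 by (subst cmp_msum_left) (auto intro: msum_zero)
  qed
  have \<pi>1\<iota>1: "cmp C \<pi>1 \<iota>1 = idt C B"
  proof -
    have GF: "cmp C (cmp C (\<iota>' x) (\<pi> (Suc x))) (cmp C (\<iota> (Suc y)) (\<pi>' y))
      = (if x = y then cmp C (\<iota>' x) (\<pi>' x) else mzero C B B)" if "x < m" "y < m" for x y
      using biproduct_sandwich[OF bX _ _ bpB(3)[OF that(2)] bpB(2)[OF that(1)]] that by simp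
    have "cmp C \<pi>1 \<iota>1 = msum B B [0..<m] (\<lambda>j. cmp C (cmp C (\<iota>' j) (\<pi> (Suc j))) (cmp C (\<iota> (Suc j)) (\<pi>' j)))"
      unfolding \<pi>1_def \<iota>1_def using F G Xo Bo GF by (intro cmp_msum_diagonal) auto
    also have "\<dots> = msum B B [0..<m] (\<lambda>j. cmp C (\<iota>' j) (\<pi>' j))"
      using GF by (intro msum_cong) auto
    finally show ?thesis using is_biproductD(7)[OF bB] by simp
  qed
  have sum: "madd C (cmp C (\<iota> 0) (\<pi> 0)) (cmp C \<iota>1 \<pi>1) = idt C X"
  proof -
    have FG: "cmp C (cmp C (\<iota> (Suc x)) (\<pi>' x)) (cmp C (\<iota>' y) (\<pi> (Suc y)))
      = (if x = y then cmp C (\<iota> (Suc x)) (\<pi> (Suc x)) else mzero C X X)" if "x < m" "y < m" for x y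
      using biproduct_sandwich[OF bB that(1,2) \<pi>[of "Suc y"] \<iota>[of "Suc x"]] that by simp
    have "cmp C \<iota>1 \<pi>1 = msum X X [0..<m] (\<lambda>j. cmp C (cmp C (\<iota> (Suc j)) (\<pi>' j)) (cmp C (\<iota>' j) (\<pi> (Suc j))))"
      unfolding \<pi>1_def \<iota>1_def using F G Xo Bo FG by (intro cmp_msum_diagonal) auto
    also have "\<dots> = msum X X [0..<m] (\<lambda>j. cmp C (\<iota> (Suc j)) (\<pi> (Suc j)))"
      using FG by (intro msum_cong) auto
    finally have "madd C (cmp C (\<iota> 0) (\<pi> 0)) (cmp C \<iota>1 \<pi>1) = msum X X [0..<Suc m] (\<lambda>a. cmp C (\<iota> a) (\<pi> a))"
      by (simp add: upt_conv_Cons map_Suc_upt[symmetric] msum_map del: upt_Suc)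
    then show ?thesis using is_biproductD(7)[OF bX] by simp
  qed
  show ?thesis
    using Xo Bo A0 \<iota>0 \<pi>0 \<iota>1 \<pi>1 \<pi>0\<iota>1 \<pi>1\<iota>0 \<pi>1\<iota>1 sum bpX(4)[of 0 0]
    by (intro is_biproductI) (auto simp: hom_iff)
qed

lemma indecomposable_local_end:
  assumes ks: "krull_schmidt C" and ind: "indecomposable C X"
  shows "local_end C X"
proof -
  have X: "X \<in> Obj C" and nz: "\<not> is_zero_obj C X" using ind unfolding indecomposable_def by auto
  obtain As and \<iota> \<pi> :: "nat \<Rightarrow> 'm" where loc_set: "\<forall>A\<in>set As. local_end C A"
    and b: "is_biproduct C [0..<length As] (\<lambda>i. As ! i) X \<iota> \<pi>"
    using ks X unfolding krull_schmidt_def by blast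
  have loc: "local_end C (As ! i)" if "i < length As" for i using loc_set that by simp
  note bp = is_biproduct_uptD[OF b]
  have not_zero: "\<not> is_zero_obj C (As ! i)" if "i < length As" for i
    using loc[OF that] local_end_id_nonzero unfolding is_zero_obj_def by blast
  consider "length As = 0" | "length As = 1" | m where "length As = Suc m" "m > 0"
    by (metis One_nat_def gr0I not0_implies_Suc)
  then show ?thesis
  proof cases
    case 1
    then show ?thesis using is_biproductD(7)[OF b] X nz unfolding is_zero_obj_def by simp
  next
    case 2
    have "cmp C (\<iota> 0) (\<pi> 0) = idt C X"
      using 2 bp(2,3) is_biproductD(7)[OF b] X by (simp add: hom_iff)
    then have "is_iso C (As ! 0) X (\<iota> 0)"
      using 2 bp(2,3) bp(4)[of 0 0] by (intro iso_intro[of _ _ _ "\<pi> 0" "\<pi> 0"]) auto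
    then show ?thesis using local_end_iso loc 2 by simp
  next
    case 3
    define Bs where "Bs = map (\<lambda>j. As ! Suc j) [0..<m]"
    have "additive C" and "set Bs \<subseteq> Obj C" using ks 3 bp(1) by (auto simp: krull_schmidt_def Bs_def)
    then obtain B and \<iota>' \<pi>' :: "nat \<Rightarrow> 'm"
      where "is_biproduct C [0..<length Bs] (\<lambda>j. Bs ! j) B \<iota>' \<pi>'"
      unfolding additive_def by blast
    then have bB: "is_biproduct C [0..<m] (\<lambda>j. As ! Suc j) B \<iota>' \<pi>'"
      by (subst (asm) is_biproduct_cong) (auto simp: Bs_def)
    note bpB = is_biproduct_uptD[OF bB]
    have split: "is_zero_obj C (A 0) \<or> is_zero_obj C (A 1)"
      if "is_biproduct C [0, 1] A X \<iota>2 \<pi>2" for A and \<iota>2 \<pi>2 :: "nat \<Rightarrow> 'm"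
      using ind that unfolding indecomposable_def by blast
    have "is_zero_obj C (As ! 0) \<or> is_zero_obj C B"
      using split[OF biproduct_split_head[OF b[unfolded 3] bB]] by simp
    moreover have "\<not> is_zero_obj C B"
    proof
      assume "is_zero_obj C B"
      then have "cmp C (\<iota>' 0) (\<pi>' 0) = mzero C B B"
        using bpB(2,3) \<open>m > 0\<close> cmp_id_right[of "cmp C (\<iota>' 0) (\<pi>' 0)" B]
        unfolding is_zero_obj_def by (simp add: hom_iff)
      then have "is_zero_obj C (As ! 1)"
        using bpB(2,3) bpB(4)[of 0 0] \<open>m > 0\<close> by (intro retract_zero_obj) auto
      then show False using not_zero 3 by auto
    qed
    ultimately show ?thesis using not_zero 3 by auto
  qed
qed


lemma biproduct_expand_source:
  assumes b: "is_biproduct C idx A Y \<iota> \<pi>" and x: "x \<in> Hom C Y Z"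
  shows "x = msum Y Z idx (\<lambda>a. cmp C (cmp C x (\<iota> a)) (\<pi> a))"
proof -
  note bp = is_biproductD[OF b]
  have "x = cmp C x (msum Y Y idx (\<lambda>a. cmp C (\<iota> a) (\<pi> a)))" using bp(7) x by (simp add: hom_iff)
  also have "\<dots> = msum Y Z idx (\<lambda>a. cmp C x (cmp C (\<iota> a) (\<pi> a)))"
    using x bp(1,4,5) by (intro cmp_msum_right) (auto intro: cmp_hom)
  also have "\<dots> = msum Y Z idx (\<lambda>a. cmp C (cmp C x (\<iota> a)) (\<pi> a))"
    using x bp(4,5) by (intro msum_cong) (simp add: hom_iff cmp_assoc)
  finally show ?thesis .
qed

lemma biproduct_expand_target:
  assumes b: "is_biproduct C idx A Y \<iota> \<pi>" and x: "x \<in> Hom C Z Y"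
  shows "x = msum Z Y idx (\<lambda>a. cmp C (\<iota> a) (cmp C (\<pi> a) x))"
proof -
  note bp = is_biproductD[OF b]
  have "x = cmp C (msum Y Y idx (\<lambda>a. cmp C (\<iota> a) (\<pi> a))) x" using bp(7) x by (simp add: hom_iff)
  also have "\<dots> = msum Z Y idx (\<lambda>a. cmp C (cmp C (\<iota> a) (\<pi> a)) x)"
    using x bp(1,4,5) by (intro cmp_msum_left) (auto intro: cmp_hom)
  also have "\<dots> = msum Z Y idx (\<lambda>a. cmp C (\<iota> a) (cmp C (\<pi> a) x))"
    using x bp(4,5) by (intro msum_cong) (simp add: hom_iff cmp_assoc)
  finally show ?thesis .
qed

lemma biproduct_components_jac_rad:
  assumes b: "is_biproduct C idx A Y \<iota> \<pi>" and b': "is_biproduct C idx' A' Y' \<iota>' \<pi>'"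
    and x: "x \<in> Hom C Y Y'"
    and components: "\<And>a b. a \<in> set idx' \<Longrightarrow> b \<in> set idx \<Longrightarrow>
      cmp C (\<pi>' a) (cmp C x (\<iota> b)) \<in> jac_rad C (A b) (A' a)"
  shows "x \<in> jac_rad C Y Y'"
proof -
  note bp = is_biproductD[OF b] and bp' = is_biproductD[OF b']
  have col: "cmp C x (\<iota> b) \<in> jac_rad C (A b) Y'" if "b \<in> set idx" for b
  proof -
    have "cmp C x (\<iota> b) = msum (A b) Y' idx' (\<lambda>a. cmp C (\<iota>' a) (cmp C (\<pi>' a) (cmp C x (\<iota> b))))"
      by (rule biproduct_expand_target[OF b' cmp_hom[OF bp(4)[OF that] x]])
    also have "\<dots> \<in> jac_rad C (A b) Y'"
      using that bp(3) bp'(1,4) by (intro msum_in_jac_rad) (auto intro!: cmp_jac_rad_left[OF components])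
    finally show ?thesis .
  qed
  then have "msum Y Y' idx (\<lambda>b. cmp C (cmp C x (\<iota> b)) (\<pi> b)) \<in> jac_rad C Y Y'"
    using bp(1,5) bp'(1) by (intro msum_in_jac_rad) (auto intro: cmp_jac_rad_right[OF col])
  then show ?thesis using biproduct_expand_source[OF b x] by simp
qed

end

section \<open>Eigenvalues on local endomorphism rings\<close>

lemma linear_relation_step:
  fixes v :: "'a \<Rightarrow> nat \<Rightarrow> 'k::field"
  assumes K: "finite K" "k0 \<in> K" and pivot: "v k0 N \<noteq> 0"
    and c': "\<exists>k\<in>K - {k0}. c' k \<noteq> 0"
      "\<And>l. (\<Sum>k\<in>K - {k0}. c' k * (v k l - v k N / v k0 N * v k0 l)) = 0"
  shows "\<exists>c. (\<exists>k\<in>K. c k \<noteq> 0) \<and> (\<forall>l. (\<Sum>k\<in>K. c k * v k l) = 0)"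
proof -
  define t where "t = (\<Sum>k\<in>K - {k0}. c' k * v k N) / v k0 N"
  define c where "c = (\<lambda>k. if k = k0 then - t else c' k)"
  have "(\<Sum>k\<in>K. c k * v k l) = 0" for l
  proof -
    have "(\<Sum>k\<in>K - {k0}. c k * v k l) = (\<Sum>k\<in>K - {k0}. c' k * v k l)"
      by (intro sum.cong) (auto simp: c_def)
    then have "(\<Sum>k\<in>K. c k * v k l) = - t * v k0 l + (\<Sum>k\<in>K - {k0}. c' k * v k l)"
      using K by (simp add: sum.remove c_def)
    also have "(\<Sum>k\<in>K - {k0}. c' k * v k l)
      = (\<Sum>k\<in>K - {k0}. c' k * (v k l - v k N / v k0 N * v k0 l) + c' k * (v k N / v k0 N) * v k0 l)"
      by (intro sum.cong) (auto simp: algebra_simps)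
    also have "\<dots> = (\<Sum>k\<in>K - {k0}. c' k * (v k l - v k N / v k0 N * v k0 l)) + t * v k0 l"
      unfolding t_def sum.distrib by (simp add: sum_distrib_right sum_divide_distrib)
    finally show ?thesis using c'(2)[of l] by simp
  qed
  moreover have "\<exists>k\<in>K. c k \<noteq> 0" using c'(1) by (auto simp: c_def)
  ultimately show ?thesis by blast
qed

lemma exists_nontrivial_linear_relation:
  fixes v :: "'a \<Rightarrow> nat \<Rightarrow> 'k::field"
  assumes "finite K" "card K > N" "\<forall>k\<in>K. \<forall>l\<ge>N. v k l = 0"
  shows "\<exists>c. (\<exists>k\<in>K. c k \<noteq> 0) \<and> (\<forall>l. (\<Sum>k\<in>K. c k * v k l) = 0)"
  using assms
proof (induction N arbitrary: K v)
  case 0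
  then obtain k0 where k0: "k0 \<in> K" by fastforce
  have "(\<Sum>k\<in>K. (if k = k0 then 1 else 0) * v k l) = 0" for l using 0 by (intro sum.neutral) auto
  then show ?case using k0 by (intro exI[of _ "\<lambda>k. if k = k0 then 1 else 0"]) auto
next
  case (Suc N)
  show ?case
  proof (cases "\<forall>k\<in>K. v k N = 0")
    case True
    then have "\<forall>k\<in>K. \<forall>l\<ge>N. v k l = 0" using Suc.prems(3) by (metis le_antisym not_less_eq_eq)
    then show ?thesis using Suc.IH[of K v] Suc.prems by simp
  next
    case False
    then obtain k0 where k0: "k0 \<in> K" "v k0 N \<noteq> 0" by blast
    define w where "w = (\<lambda>k l. v k l - v k N / v k0 N * v k0 l)"
    have "w k l = 0" if "k \<in> K" "N \<le> l" for k l
    proof (cases "l = N")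
      case True
      then show ?thesis using k0 by (simp add: w_def)
    next
      case False
      then have "Suc N \<le> l" using that by simp
      then show ?thesis using Suc.prems(3) that k0(1) by (simp add: w_def)
    qed
    moreover have card_K': "N < card (K - {k0})" using Suc.prems(1,2) k0(1) by simp
    ultimately obtain c' where "\<exists>k\<in>K - {k0}. c' k \<noteq> 0" "\<forall>l. (\<Sum>k\<in>K - {k0}. c' k * w k l) = 0"
      using Suc.IH[of "K - {k0}" w] card_K' Suc.prems(1) by blast
    then show ?thesis using linear_relation_step[of K k0 v N c'] Suc.prems(1) k0 by (simp add: w_def)
  qed
qed

context linear_category
begin

primrec horner :: "'o \<Rightarrow> 'm \<Rightarrow> 'k list \<Rightarrow> 'm" where
  "horner W e [] = mzero C W W"
| "horner W e (a # as) = madd C (smul C a (idt C W)) (cmp C e (horner W e as))"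

lemma horner_hom: "W \<in> Obj C \<Longrightarrow> e \<in> Hom C W W \<Longrightarrow>
    horner W e as \<in> Hom C W W"
  by (induction as) (auto simp: zero_hom madd_hom smul_hom id_hom cmp_hom)

definition poly_at :: "'o \<Rightarrow> 'm \<Rightarrow> 'k poly \<Rightarrow> 'm" where "poly_at W e p = horner W e (coeffs p)"

lemma poly_at_hom: "W \<in> Obj C \<Longrightarrow> e \<in> Hom C W W \<Longrightarrow>
    poly_at W e p \<in> Hom C W W"
  unfolding poly_at_def by (rule horner_hom)

lemma poly_at_0[simp]: "poly_at W e 0 = mzero C W W" by (simp add: poly_at_def)

lemma poly_at_pCons: "W \<in> Obj C \<Longrightarrow> e \<in> Hom C W W \<Longrightarrow>
    poly_at W e (pCons a p) = madd C (smul C a (idt C W)) (cmp C e (poly_at W e p))"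
proof -
  assume W: "W \<in> Obj C" and e: "e \<in> Hom C W W"
  have "horner W e (cCons a (coeffs p)) = horner W e (a # coeffs p)"
  proof (cases "coeffs p = [] \<and> a = 0")
    case True
    then show ?thesis using W e by (simp add: hom_iff)
  next
    case False
    then show ?thesis by (auto simp: cCons_def)
  qed
  thus ?thesis by (simp add: poly_at_def)
qed

lemma poly_at_add: "W \<in> Obj C \<Longrightarrow> e \<in> Hom C W W \<Longrightarrow>
    poly_at W e (p + q) = madd C (poly_at W e p) (poly_at W e q)"
proof (induction p q rule: poly_induct2)
  case 0
  then show ?case by simp
next
  case (pCons a p b q)
  have h: "poly_at W e p \<in> Hom C W W" "poly_at W e q \<in> Hom C W W" using pCons poly_at_hom by auto
  have "poly_at W e (pCons a p + pCons b q) = madd C (smul C (a + b) (idt C W)) (cmp C e (madd C (poly_at W e p) (poly_at W e q)))"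
    using pCons by (simp add: poly_at_pCons)
  also have "\<dots> = madd C (madd C (smul C a (idt C W)) (smul C b (idt C W))) (madd C (cmp C e (poly_at W e p)) (cmp C e (poly_at W e q)))"
    using pCons.prems h by (simp add: hom_iff smul_add_scalar cmp_madd_right)
  also have "\<dots> = madd C (madd C (smul C a (idt C W)) (cmp C e (poly_at W e p))) (madd C (smul C b (idt C W)) (cmp C e (poly_at W e q)))"
    using pCons.prems h by (simp add: hom_iff madd_assoc madd_left_comm)
  finally show ?case using pCons.prems by (simp add: poly_at_pCons)
qed

lemma poly_at_smult: "W \<in> Obj C \<Longrightarrow> e \<in> Hom C W W \<Longrightarrow>
    poly_at W e (smult c p) = smul C c (poly_at W e p)"
proof (induction p)
  case 0
  then show ?case by simp
next
  case (pCons a p)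
  have h: "poly_at W e p \<in> Hom C W W" using pCons poly_at_hom by auto
  show ?case using pCons h by (simp add: poly_at_pCons hom_iff smul_madd mult.commute)
qed

lemma poly_at_linear_factor:
  assumes W: "W \<in> Obj C" and e: "e \<in> Hom C W W"
  shows "poly_at W e ([:- x, 1:] * q) = cmp C (msub C e (smul C x (idt C W))) (poly_at W e q)"
proof -
  have h: "poly_at W e q \<in> Hom C W W" using W e poly_at_hom by auto
  have "[:- x, 1:] * q = smult (- x) q + pCons 0 q" by (simp add: mult_pCons_left)
  hence "poly_at W e ([:- x, 1:] * q) = poly_at W e (smult (- x) q + pCons 0 q)" by (simp only:)
  also have "\<dots> = madd C (poly_at W e (smult (- x) q)) (poly_at W e (pCons 0 q))" by (rule poly_at_add[OF W e])
  also have "\<dots> = madd C (smul C (- x) (poly_at W e q)) (cmp C e (poly_at W e q))"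
    unfolding poly_at_smult[OF W e] poly_at_pCons[OF W e] using W e h by (simp add: hom_iff)
  also have "\<dots> = cmp C (msub C e (smul C x (idt C W))) (poly_at W e q)"
    using W e h by (simp add: hom_iff msub_def mneg_def cmp_madd_left madd_comm)
  finally show ?thesis .
qed

definition endo_power :: "'o \<Rightarrow> 'm \<Rightarrow> nat \<Rightarrow> 'm" where "endo_power W e n = (cmp C e ^^ n) (idt C W)"

lemma endo_power_hom: "W \<in> Obj C \<Longrightarrow> e \<in> Hom C W W \<Longrightarrow>
    endo_power W e n \<in> Hom C W W"
  by (induction n) (auto simp: endo_power_def id_hom cmp_hom)

lemma endo_power_0: "endo_power W e 0 = idt C W" by (simp add: endo_power_def)
lemma endo_power_Suc: "endo_power W e (Suc n) = cmp C e (endo_power W e n)" by (simp add: endo_power_def)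

lemma poly_at_Poly: "W \<in> Obj C \<Longrightarrow> e \<in> Hom C W W \<Longrightarrow>
  poly_at W e (Poly cs) = msum W W [0..<length cs] (\<lambda>n. smul C (cs ! n) (endo_power W e n))"
proof (induction cs)
  case Nil
  then show ?case by simp
next
  case (Cons a cs)
  have hs: "\<And>n. smul C (cs ! n) (endo_power W e n) \<in> Hom C W W" using Cons.prems endo_power_hom smul_hom by blast
  have "poly_at W e (Poly (a # cs)) = madd C (smul C a (idt C W)) (cmp C e (msum W W [0..<length cs] (\<lambda>n. smul C (cs ! n) (endo_power W e n))))"
    using Cons by (simp add: poly_at_pCons)
  also have "cmp C e (msum W W [0..<length cs] (\<lambda>n. smul C (cs ! n) (endo_power W e n))) = msum W W [0..<length cs] (\<lambda>n. cmp C e (smul C (cs ! n) (endo_power W e n)))"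
    using Cons.prems hs by (intro cmp_msum_right) auto
  also have "\<dots> = msum W W [0..<length cs] (\<lambda>n. smul C ((a # cs) ! Suc n) (endo_power W e (Suc n)))"
  proof (intro msum_cong)
    fix n
    have "endo_power W e n \<in> Hom C W W" using Cons.prems endo_power_hom by blast
    thus "cmp C e (smul C (cs ! n) (endo_power W e n)) = smul C ((a # cs) ! Suc n) (endo_power W e (Suc n))"
      using Cons.prems by (simp add: endo_power_Suc hom_iff)
  qed
  finally have "poly_at W e (Poly (a # cs)) = madd C (smul C ((a # cs) ! 0) (endo_power W e 0)) (msum W W (map Suc [0..<length cs]) (\<lambda>n. smul C ((a # cs) ! n) (endo_power W e n)))"
    by (simp add: endo_power_0 msum_map)
  also have "\<dots> = msum W W (0 # map Suc [0..<length cs]) (\<lambda>n. smul C ((a # cs) ! n) (endo_power W e n))" by simp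
  also have "0 # map Suc [0..<length cs] = [0..<length (a # cs)]"
    by (simp only: length_Cons map_Suc_upt) (rule upt_conv_Cons[symmetric], simp)
  finally show ?case .
qed

lemma msum_smul_scalar: "x \<in> Hom C X Y \<Longrightarrow>
    msum X Y xs (\<lambda>n. smul C (a n) x) = smul C (sum_list (map a xs)) x"
proof (induction xs)
  case Nil
  then show ?case by (simp add: hom_iff)
next
  case (Cons y xs)
  then show ?case by (simp add: smul_add_scalar hom_iff)
qed

lemma hom_finite_coordinates:
  assumes hf: "hom_finite C" and X: "X \<in> Obj C" and Y: "Y \<in> Obj C" and h: "\<And>n. h n \<in> Hom C X Y"
  obtains N b co where "\<And>l. l < N \<Longrightarrow> b l \<in> Hom C X Y" "\<And>n l. N \<le> l \<Longrightarrow> co n l = 0"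
    "\<And>n. h n = msum X Y [0..<N] (\<lambda>l. smul C (co n l) (b l))"
proof -
  obtain bs where bs: "set bs \<subseteq> Hom C X Y"
    "\<forall>g\<in>Hom C X Y. \<exists>cs. length cs = length bs \<and> g = lincomb C X Y cs bs"
    using hf X Y unfolding hom_finite_def by blast
  define cs where "cs = (\<lambda>n. SOME cs. length cs = length bs \<and> h n = lincomb C X Y cs bs)"
  have cs: "length (cs n) = length bs \<and> h n = lincomb C X Y (cs n) bs" for n
  proof -
    have "\<exists>cs. length cs = length bs \<and> h n = lincomb C X Y cs bs" using bs(2) h by blast
    then show ?thesis unfolding cs_def by (rule someI_ex)
  qed
  show ?thesis
  proof
    show "bs ! l \<in> Hom C X Y" if "l < length bs" for l using bs(1) that by auto
    show "(if l < length bs then cs n ! l else 0) = 0" if "length bs \<le> l" for n l using that by simp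
    show "h n = msum X Y [0..<length bs] (\<lambda>l. smul C (if l < length bs then cs n ! l else 0) (bs ! l))" for n
      using cs[of n] by (simp add: lincomb_msum) (intro msum_cong, simp)
  qed
qed

lemma hom_finite_linear_relation:
  assumes hf: "hom_finite C" and X: "X \<in> Obj C" and Y: "Y \<in> Obj C" and h: "\<And>n. h n \<in> Hom C X Y"
  obtains N c where "\<exists>n<Suc N. c n \<noteq> 0" "msum X Y [0..<Suc N] (\<lambda>n. smul C (c n) (h n)) = mzero C X Y"
proof -
  obtain N b co where b: "\<And>l. l < N \<Longrightarrow> b l \<in> Hom C X Y" and co: "\<And>n l. N \<le> l \<Longrightarrow> co n l = 0"
    and hb: "\<And>n. h n = msum X Y [0..<N] (\<lambda>l. smul C (co n l) (b l))"
    using hom_finite_coordinates[where h = h, OF hf X Y h] by blast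
  have "\<exists>c. (\<exists>n\<in>{0..<Suc N}. c n \<noteq> 0) \<and> (\<forall>l. (\<Sum>n\<in>{0..<Suc N}. c n * co n l) = 0)"
    by (rule exists_nontrivial_linear_relation[where N = N]) (simp_all add: co)
  then obtain c where c: "\<exists>n\<in>{0..<Suc N}. c n \<noteq> 0" "\<forall>l. (\<Sum>n\<in>{0..<Suc N}. c n * co n l) = 0"
    by blast
  have "smul C (c n) (h n) = msum X Y [0..<N] (\<lambda>l. smul C (c n * co n l) (b l))" for n
  proof -
    have "smul C (c n) (h n) = msum X Y [0..<N] (\<lambda>l. smul C (c n) (smul C (co n l) (b l)))"
      unfolding hb[of n] using X Y b by (intro smul_msum) (auto intro: smul_hom)
    also have "\<dots> = msum X Y [0..<N] (\<lambda>l. smul C (c n * co n l) (b l))"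
      using b by (intro msum_cong) (simp add: hom_iff)
    finally show ?thesis .
  qed
  then have "msum X Y [0..<Suc N] (\<lambda>n. smul C (c n) (h n))
      = msum X Y [0..<Suc N] (\<lambda>n. msum X Y [0..<N] (\<lambda>l. smul C (c n * co n l) (b l)))"
    by (intro msum_cong) simp
  also have "\<dots> = msum X Y [0..<N] (\<lambda>l. msum X Y [0..<Suc N] (\<lambda>n. smul C (c n * co n l) (b l)))"
    using X Y b by (intro msum_swap) (auto intro: smul_hom)
  also have "\<dots> = msum X Y [0..<N] (\<lambda>l. smul C (\<Sum>n\<in>{0..<Suc N}. c n * co n l) (b l))"
    using b by (intro msum_cong) (simp add: msum_smul_scalar flip: sum_set_upt_conv_sum_list_nat del: upt_Suc)
  also have "\<dots> = mzero C X Y" using X Y b c(2) by (intro msum_zero) (auto simp: hom_iff)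
  finally show ?thesis using c(1) by (intro that[of N c]) auto
qed

lemma exists_annihilating_poly:
  assumes hf: "hom_finite C" and W: "W \<in> Obj C" and e: "e \<in> Hom C W W"
  shows "\<exists>p. p \<noteq> 0 \<and> poly_at W e p = mzero C W W"
proof -
  obtain N c where c: "\<exists>n<Suc N. c n \<noteq> 0"
    and rel: "msum W W [0..<Suc N] (\<lambda>n. smul C (c n) (endo_power W e n)) = mzero C W W"
    using hom_finite_linear_relation[where h = "endo_power W e", OF hf W W endo_power_hom[OF W e]] by blast
  define cs where "cs = map c [0..<Suc N]"
  have cs: "length cs = Suc N" "\<And>n. n < Suc N \<Longrightarrow> cs ! n = c n"
    unfolding cs_def by (simp_all del: upt_Suc)
  have "Poly cs \<noteq> 0"
  proof
    assume "Poly cs = 0"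
    obtain n where n: "n < Suc N" "c n \<noteq> 0" using c by blast
    then have "coeff (Poly cs) n = c n" using cs by (simp add: nth_default_nth del: upt_Suc)
    with \<open>Poly cs = 0\<close> n(2) show False by simp
  qed
  moreover have "poly_at W e (Poly cs) = msum W W [0..<Suc N] (\<lambda>n. smul C (c n) (endo_power W e n))"
    unfolding poly_at_Poly[OF W e] cs(1) by (intro msum_cong) (simp add: cs(2) del: upt_Suc)
  ultimately show ?thesis unfolding rel by blast
qed

lemma annihilated_not_iso:
  assumes ac: "alg_closed TYPE('k)" and l: "local_end C W" and e: "e \<in> Hom C W W"
  shows "p \<noteq> 0 \<Longrightarrow> poly_at W e p = mzero C W W \<Longrightarrow> \<exists>x. \<not> is_iso C W W (msub C e (smul C x (idt C W)))"
proof (induction "degree p" arbitrary: p rule: less_induct)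
  case less
  have W: "W \<in> Obj C" using l local_end_obj by blast
  show ?case
  proof (cases "degree p = 0")
    case True
    define a where "a = coeff p 0"
    have p: "p = pCons a 0" using degree_0_id[OF True] a_def by simp
    have a0: "a \<noteq> 0" using less.prems p by auto
    have "poly_at W e p = smul C a (idt C W)" using p W e by (simp add: poly_at_pCons hom_iff)
    hence z: "smul C a (idt C W) = mzero C W W" using less.prems by simp
    have "idt C W = smul C (inverse a) (smul C a (idt C W))" using a0 W by simp
    also have "\<dots> = mzero C W W" unfolding z using W by simp
    finally show ?thesis using l local_end_id_nonzero by blast
  next
    case False
    then obtain x where "poly p x = 0" using ac unfolding alg_closed_def by blast
    then obtain q where pq: "p = [:- x, 1:] * q" using poly_eq_0_iff_dvd by (metis dvdE)
    have q0: "q \<noteq> 0" using pq less.prems by auto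
    have "degree p = degree [:- x, 1:] + degree q" unfolding pq by (rule degree_mult_eq) (use q0 in auto)
    hence dq: "degree q < degree p" by simp
    have Evp: "cmp C (msub C e (smul C x (idt C W))) (poly_at W e q) = mzero C W W"
      using less.prems(2) unfolding pq poly_at_linear_factor[OF W e] .
    show ?thesis
    proof (cases "is_iso C W W (msub C e (smul C x (idt C W)))")
      case True
      have eh: "msub C e (smul C x (idt C W)) \<in> Hom C W W" using e W by (simp add: hom_iff)
      have "cmp C (msub C e (smul C x (idt C W))) (poly_at W e q) = cmp C (msub C e (smul C x (idt C W))) (mzero C W W)"
        using Evp eh W by (simp add: hom_iff)
      hence "poly_at W e q = mzero C W W" using iso_cancel_left[OF True] poly_at_hom[OF W e] zero_hom[OF W W] by blast
      thus ?thesis using less.hyps[OF dq q0] by blast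
    next
      case False
      thus ?thesis by blast
    qed
  qed
qed

lemma local_end_eigenvalue:
  assumes ac: "alg_closed TYPE('k)" and hf: "hom_finite C" and l: "local_end C W" and e: "e \<in> Hom C W W"
  shows "\<exists>x. msub C e (smul C x (idt C W)) \<in> jac_rad C W W"
proof -
  have W: "W \<in> Obj C" using l local_end_obj by blast
  obtain p where "p \<noteq> 0" "poly_at W e p = mzero C W W" using exists_annihilating_poly[OF hf W e] by blast
  then obtain x where "\<not> is_iso C W W (msub C e (smul C x (idt C W)))"
    using annihilated_not_iso[OF ac l e] by blast
  moreover have "msub C e (smul C x (idt C W)) \<in> Hom C W W" using e W by (simp add: hom_iff)
  ultimately show ?thesis using local_end_non_iso_in_jac_rad[OF l] by blast
qed

section \<open>Ideals and their products\<close>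

lemma ideal_hom: "is_ideal C I \<Longrightarrow> x \<in> I X Y \<Longrightarrow> x \<in> Hom C X Y"
  unfolding is_ideal_def by (elim conjE) blast

lemma ideal_zero: "is_ideal C I \<Longrightarrow> X \<in> Obj C \<Longrightarrow>
    Y \<in> Obj C \<Longrightarrow> mzero C X Y \<in> I X Y"
  unfolding is_ideal_def by (elim conjE) blast

lemma ideal_madd: "is_ideal C I \<Longrightarrow> x \<in> I X Y \<Longrightarrow>
    y \<in> I X Y \<Longrightarrow> madd C x y \<in> I X Y"
  unfolding is_ideal_def by (elim conjE) (meson hom_objects subsetD)

lemma ideal_cmp_left: "is_ideal C I \<Longrightarrow> x \<in> I X Y \<Longrightarrow>
    g \<in> Hom C Y Z \<Longrightarrow> cmp C g x \<in> I X Z"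
  unfolding is_ideal_def by (elim conjE) blast

lemma ideal_msum:
  "is_ideal C I \<Longrightarrow> X \<in> Obj C \<Longrightarrow> Y \<in> Obj C \<Longrightarrow>
    (\<And>x. x \<in> set xs \<Longrightarrow> F x \<in> I X Y) \<Longrightarrow>
   msum X Y xs F \<in> I X Y"
  by (induction xs) (auto intro: ideal_zero ideal_madd)

lemma ideal_prod_hom: "x \<in> ideal_prod C A B X Y \<Longrightarrow>
    (\<And>X Y. A X Y \<subseteq> Hom C X Y) \<Longrightarrow>
    (\<And>X Y. B X Y \<subseteq> Hom C X Y) \<Longrightarrow> X \<in> Obj C \<Longrightarrow>
    Y \<in> Obj C \<Longrightarrow>
  x \<in> Hom C X Y"
proof (induction rule: ideal_prod.induct)
  case ip_zero
  then show ?case by (simp add: zero_hom)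
next
  case (ip_step b W a s)
  then show ?case by (meson madd_hom cmp_hom subsetD)
qed

lemma ideal_prod_madd: "x \<in> ideal_prod C A B X Y \<Longrightarrow>
    (\<And>X Y. A X Y \<subseteq> Hom C X Y) \<Longrightarrow>
    (\<And>X Y. B X Y \<subseteq> Hom C X Y) \<Longrightarrow> X \<in> Obj C \<Longrightarrow>
    Y \<in> Obj C \<Longrightarrow>
  y \<in> ideal_prod C A B X Y \<Longrightarrow> madd C x y \<in> ideal_prod C A B X Y"
proof (induction rule: ideal_prod.induct)
  case ip_zero
  then show ?case using ideal_prod_hom[of y A B X Y] by (simp add: hom_iff)
next
  case (ip_step b W a s)
  have ab: "cmp C a b \<in> Hom C X Y" using ip_step by (meson cmp_hom subsetD)
  have s: "s \<in> Hom C X Y" using ip_step ideal_prod_hom by blast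
  have y: "y \<in> Hom C X Y" using ip_step ideal_prod_hom by blast
  have "madd C (madd C (cmp C a b) s) y = madd C (cmp C a b) (madd C s y)"
    using ab s y by (intro madd_assoc) (auto simp: hom_iff)
  moreover have "madd C (cmp C a b) (madd C s y) \<in> ideal_prod C A B X Y"
    using ip_step by (intro ideal_prod.ip_step) auto
  ultimately show ?case by simp
qed

lemma ideal_prod_cmp: "(\<And>X Y. A X Y \<subseteq> Hom C X Y) \<Longrightarrow>
    (\<And>X Y. B X Y \<subseteq> Hom C X Y) \<Longrightarrow> X \<in> Obj C \<Longrightarrow>
    Y \<in> Obj C \<Longrightarrow>
  b \<in> B X W \<Longrightarrow> a \<in> A W Y \<Longrightarrow> cmp C a b \<in> ideal_prod C A B X Y"
proof -
  assume h: "\<And>X Y. A X Y \<subseteq> Hom C X Y" "\<And>X Y. B X Y \<subseteq> Hom C X Y" "X \<in> Obj C" "Y \<in> Obj C"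
    "b \<in> B X W" "a \<in> A W Y"
  have "madd C (cmp C a b) (mzero C X Y) \<in> ideal_prod C A B X Y"
    using h by (intro ideal_prod.ip_step ideal_prod.ip_zero)
  moreover have "cmp C a b \<in> Hom C X Y" using h by (meson cmp_hom subsetD)
  ultimately show ?thesis by (simp add: hom_iff)
qed

lemma ideal_prod_msum: "(\<And>X Y. A X Y \<subseteq> Hom C X Y) \<Longrightarrow>
    (\<And>X Y. B X Y \<subseteq> Hom C X Y) \<Longrightarrow> X \<in> Obj C \<Longrightarrow>
    Y \<in> Obj C \<Longrightarrow>
  (\<And>x. x \<in> set xs \<Longrightarrow> F x \<in> ideal_prod C A B X Y) \<Longrightarrow> msum X Y xs F \<in> ideal_prod C A B X Y"
proof (induction xs)
  case Nil
  then show ?case by (simp add: ideal_prod.ip_zero)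
next
  case (Cons a xs)
  then show ?case using ideal_prod_madd[of "F a" A B X Y "msum X Y xs F"] by simp
qed

end

lemma set_bp_index: "set (bp_index n m) = {(i, j). i < n \<and> j < m i}"
  by (auto simp: bp_index_def)

section \<open>Source maps from bases of irreducible morphisms\<close>

locale irr_basis_source = linear_category C for C :: "('o, 'm, 'k::field) kcat" +
  fixes I :: "'o \<Rightarrow> 'o \<Rightarrow> 'm set" and X Y :: 'o and n :: nat and m :: "nat \<Rightarrow> nat"
    and Ys :: "nat \<Rightarrow> 'o" and \<iota> \<pi> :: "nat \<times> nat \<Rightarrow> 'm" and f :: 'm and fc :: "nat \<Rightarrow> nat \<Rightarrow> 'm"
  assumes alg_closed_field: "alg_closed TYPE('k)" and hom_fin: "hom_finite C"
    and krull_schmidt_cat: "krull_schmidt C"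
    and ideal_I: "is_ideal C I" and left_approx_exist: "\<forall>X\<in>Obj C. \<exists>A f. left_approx C I X A f"
    and X_obj: "X \<in> Obj C"
    and Ys_indecomposable: "\<forall>i<n. indecomposable C (Ys i)"
    and Ys_pairwise_nonisomorphic: "\<forall>i<n. \<forall>j<n. i \<noteq> j \<longrightarrow> \<not> isomorphic C (Ys i) (Ys j)"
    and Y_biproduct: "is_biproduct C (bp_index n m) (\<lambda>(i, j). Ys i) Y \<iota> \<pi>"
    and f_hom: "f \<in> Hom C X Y"
    and f_components: "\<forall>i<n. \<forall>j<m i. cmp C (\<pi> (i, j)) f = fc i j \<and> fc i j \<in> I X (Ys i)"
    and irr_basis: "\<forall>i<n. irr_minus_basis C I X (Ys i) (map (fc i) [0..<m i])"
    and irr_complete: "\<forall>Y'. indecomposable C Y' \<and> irr_minus_nonzero C I X Y' \<longrightarrow> (\<exists>i<n. isomorphic C Y' (Ys i))"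
begin

abbreviation "idx \<equiv> bp_index n m"
abbreviation "JI \<equiv> ideal_prod C (jac_rad C) I"

lemma idx_mem: "(i, j) \<in> set idx \<longleftrightarrow> i < n \<and> j < m i"
  by (simp add: set_bp_index)

lemma idx_cases: "a \<in> set idx \<Longrightarrow> (\<And>i j. a = (i, j) \<Longrightarrow>
    i < n \<Longrightarrow> j < m i \<Longrightarrow> Q) \<Longrightarrow> Q"
  using idx_mem by (cases a) auto

lemma Y_obj: "Y \<in> Obj C"
  using is_biproductD(1)[OF Y_biproduct] .

lemma Ys_obj: "i < n \<Longrightarrow> Ys i \<in> Obj C"
  using Ys_indecomposable by (simp add: indecomposable_def)

lemma Ys_local: "i < n \<Longrightarrow> local_end C (Ys i)"
  using Ys_indecomposable indecomposable_local_end[OF krull_schmidt_cat] by blast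

lemma iota_hom: "i < n \<Longrightarrow> j < m i \<Longrightarrow> \<iota> (i, j) \<in> Hom C (Ys i) Y"
  using is_biproductD(4)[OF Y_biproduct, of "(i, j)"] idx_mem by simp

lemma pi_hom: "i < n \<Longrightarrow> j < m i \<Longrightarrow> \<pi> (i, j) \<in> Hom C Y (Ys i)"
  using is_biproductD(5)[OF Y_biproduct, of "(i, j)"] idx_mem by simp

lemma pi_iota: "i < n \<Longrightarrow> j < m i \<Longrightarrow> i' < n \<Longrightarrow>
    j' < m i' \<Longrightarrow>
  cmp C (\<pi> (i, j)) (\<iota> (i', j')) = (if (i, j) = (i', j') then idt C (Ys i) else mzero C (Ys i') (Ys i))"
  using is_biproductD(6)[OF Y_biproduct, of "(i, j)" "(i', j')"] idx_mem by simp

lemma iota_hom_idx: "a \<in> set idx \<Longrightarrow> \<iota> a \<in> Hom C (Ys (fst a)) Y"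
  using iota_hom by (auto elim: idx_cases)

lemma pi_hom_idx: "a \<in> set idx \<Longrightarrow> \<pi> a \<in> Hom C Y (Ys (fst a))"
  using pi_hom by (auto elim: idx_cases)

lemma fc_eq: "i < n \<Longrightarrow> j < m i \<Longrightarrow> cmp C (\<pi> (i, j)) f = fc i j"
  using f_components by blast

lemma fc_in_I: "i < n \<Longrightarrow> j < m i \<Longrightarrow> fc i j \<in> I X (Ys i)"
  using f_components by blast

lemma I_subset_hom: "I A B \<subseteq> Hom C A B"
  using ideal_I ideal_hom by blast

lemma fc_hom: "i < n \<Longrightarrow> j < m i \<Longrightarrow> fc i j \<in> Hom C X (Ys i)"
  using fc_in_I I_subset_hom by blast

lemma jac_rad_subset_hom: "jac_rad C A B \<subseteq> Hom C A B"
  using jac_rad_hom by blast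

lemma f_in_I: "f \<in> I X Y"
proof -
  have "msum X Y idx (\<lambda>a. cmp C (\<iota> a) (cmp C (\<pi> a) f)) \<in> I X Y"
  proof (intro ideal_msum[OF ideal_I X_obj Y_obj])
    fix a assume "a \<in> set idx"
    then obtain i j where a: "a = (i, j)" "i < n" "j < m i" by (rule idx_cases)
    then show "cmp C (\<iota> a) (cmp C (\<pi> a) f) \<in> I X Y"
      using fc_in_I[OF a(2,3)] iota_hom[OF a(2,3)] by (simp add: fc_eq ideal_cmp_left[OF ideal_I])
  qed
  then show ?thesis using biproduct_expand_target[OF Y_biproduct f_hom] by simp
qed

lemma msum_idx_block:
  assumes "i < n" "Z \<in> Obj C" and F: "\<And>a. a \<in> set idx \<Longrightarrow> F a \<in> Hom C X Z"
    and off_block: "\<And>a. a \<in> set idx \<Longrightarrow> fst a \<noteq> i \<Longrightarrow> F a = mzero C X Z"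
  shows "msum X Z idx F = msum X Z [0..<m i] (\<lambda>j. F (i, j))"
proof -
  have "msum X Z idx F = msum X Z [0..<n] (\<lambda>i'. msum X Z (map (\<lambda>j. (i', j)) [0..<m i']) F)"
    unfolding bp_index_def using X_obj assms(2) F by (intro msum_concat) (auto simp: idx_mem)
  also have "\<dots> = msum X Z (map (\<lambda>j. (i, j)) [0..<m i]) F"
    using assms X_obj by (intro msum_single) (auto simp: idx_mem intro!: msum_hom msum_zero)
  finally show ?thesis by (simp add: msum_map)
qed

lemma lincomb_fc:
  "length cs = m i \<Longrightarrow>
   lincomb C X (Ys i) cs (map (fc i) [0..<m i]) = msum X (Ys i) [0..<m i] (\<lambda>j. smul C (cs ! j) (fc i j))"
  by (simp add: lincomb_msum) (intro msum_cong, simp)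

lemma fc_span:
  assumes "i < n" "\<psi> \<in> I X (Ys i)"
  obtains cs where "length cs = m i"
    "msub C \<psi> (msum X (Ys i) [0..<m i] (\<lambda>j. smul C (cs ! j) (fc i j))) \<in> JI X (Ys i)"
proof -
  have "quot_basis C X (Ys i) (I X (Ys i)) (JI X (Ys i)) (map (fc i) [0..<m i])"
    using irr_basis assms(1) by (simp add: irr_minus_basis_def)
  then obtain cs where "length cs = m i"
    "msub C \<psi> (lincomb C X (Ys i) cs (map (fc i) [0..<m i])) \<in> JI X (Ys i)"
    using assms(2) unfolding quot_basis_def by auto
  then show ?thesis using that lincomb_fc by simp
qed

lemma fc_independent:
  assumes "i < n" "length cs = m i"
    and "msum X (Ys i) [0..<m i] (\<lambda>j. smul C (cs ! j) (fc i j)) \<in> JI X (Ys i)"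
  shows "\<forall>c\<in>set cs. c = 0"
proof -
  have "quot_basis C X (Ys i) (I X (Ys i)) (JI X (Ys i)) (map (fc i) [0..<m i])"
    using irr_basis assms(1) by (simp add: irr_minus_basis_def)
  then show ?thesis using assms(2,3) lincomb_fc unfolding quot_basis_def by simp
qed

subsection \<open>The approximation property\<close>

context
  fixes A0 u assumes u_left_approx: "left_approx C I X A0 u"
begin

abbreviation factors_mod_rad :: "'o \<Rightarrow> 'm \<Rightarrow> bool" where
  "factors_mod_rad W \<phi> \<equiv> \<exists>h\<in>Hom C Y W. \<exists>r\<in>jac_rad C A0 W. \<phi> = madd C (cmp C h f) (cmp C r u)"

lemma u_in_I: "u \<in> I X A0"
  using u_left_approx unfolding left_approx_def by blast

lemma u_hom: "u \<in> Hom C X A0"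
  using u_in_I I_subset_hom by blast

lemma A0_obj: "A0 \<in> Obj C"
  using u_hom hom_objects by blast

lemma factor_through_u: "f' \<in> I X A' \<Longrightarrow> \<exists>c\<in>Hom C A0 A'. f' = cmp C c u"
  using u_left_approx unfolding left_approx_def by blast

lemma factors_mod_rad_hom: "factors_mod_rad W \<phi> \<Longrightarrow> \<phi> \<in> Hom C X W"
  using f_hom u_hom jac_rad_hom by (auto intro!: madd_hom cmp_hom)

lemma factors_mod_rad_madd:
  assumes "factors_mod_rad W \<phi>" "factors_mod_rad W \<psi>"
  shows "factors_mod_rad W (madd C \<phi> \<psi>)"
proof -
  obtain h r where hr: "h \<in> Hom C Y W" "r \<in> jac_rad C A0 W" "\<phi> = madd C (cmp C h f) (cmp C r u)"
    using assms(1) by blast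
  obtain h' r' where hr': "h' \<in> Hom C Y W" "r' \<in> jac_rad C A0 W" "\<psi> = madd C (cmp C h' f) (cmp C r' u)"
    using assms(2) by blast
  have rh: "r \<in> Hom C A0 W" "r' \<in> Hom C A0 W" using hr hr' jac_rad_hom by auto
  have "madd C \<phi> \<psi> = madd C (madd C (cmp C h f) (cmp C h' f)) (madd C (cmp C r u) (cmp C r' u))"
    unfolding hr(3) hr'(3) using hr hr' rh f_hom u_hom by (intro madd_swap) (auto simp: hom_iff)
  also have "\<dots> = madd C (cmp C (madd C h h') f) (cmp C (madd C r r') u)"
    using hr hr' rh f_hom u_hom by (simp add: hom_iff cmp_madd_left)
  finally show ?thesis using hr hr' madd_hom madd_in_jac_rad by blast
qed

lemma factors_mod_rad_cmp:
  assumes "factors_mod_rad W \<phi>" "s \<in> Hom C W W'"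
  shows "factors_mod_rad W' (cmp C s \<phi>)"
proof -
  obtain h r where hr: "h \<in> Hom C Y W" "r \<in> jac_rad C A0 W" "\<phi> = madd C (cmp C h f) (cmp C r u)"
    using assms(1) by blast
  have "cmp C s \<phi> = madd C (cmp C (cmp C s h) f) (cmp C (cmp C s r) u)"
    unfolding hr(3) using hr jac_rad_hom assms(2) f_hom u_hom by (simp add: hom_iff cmp_madd_right cmp_assoc)
  then show ?thesis using hr assms(2) cmp_hom cmp_jac_rad_left by blast
qed

lemma factors_mod_rad_zero: "W \<in> Obj C \<Longrightarrow> factors_mod_rad W (mzero C X W)"
  using Y_obj A0_obj f_hom u_hom X_obj zero_hom zero_in_jac_rad
  by (intro bexI[of _ "mzero C Y W"] bexI[of _ "mzero C A0 W"]) (auto simp: hom_iff)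

lemma factors_mod_rad_msum:
  "W \<in> Obj C \<Longrightarrow> (\<And>x. x \<in> set xs \<Longrightarrow>
    factors_mod_rad W (F x)) \<Longrightarrow> factors_mod_rad W (msum X W xs F)"
  by (induction xs) (use factors_mod_rad_zero factors_mod_rad_madd in auto)

lemma factors_mod_rad_smul:
  assumes "factors_mod_rad W \<phi>"
  shows "factors_mod_rad W (smul C c \<phi>)"
proof -
  have \<phi>: "\<phi> \<in> Hom C X W" using factors_mod_rad_hom[OF assms] .
  then have W: "W \<in> Obj C" using hom_objects by blast
  have "factors_mod_rad W (cmp C (smul C c (idt C W)) \<phi>)"
    using assms W by (intro factors_mod_rad_cmp) (auto intro: smul_hom id_hom)
  then show ?thesis using \<phi> W by (simp add: hom_iff)
qed

lemma factors_mod_rad_JI: "\<phi> \<in> JI X W \<Longrightarrow> W \<in> Obj C \<Longrightarrow>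
    factors_mod_rad W \<phi>"
proof (induction rule: ideal_prod.induct)
  case ip_zero
  then show ?case using factors_mod_rad_zero by simp
next
  case (ip_step b W1 a s)
  obtain c where c: "c \<in> Hom C A0 W1" "b = cmp C c u" using factor_through_u[OF ip_step(1)] by blast
  have "cmp C a b = madd C (cmp C (mzero C Y W) f) (cmp C (cmp C a c) u)"
    unfolding c(2) using ip_step c f_hom u_hom X_obj jac_rad_hom by (simp add: hom_iff cmp_assoc)
  then have "factors_mod_rad W (cmp C a b)"
    using ip_step(2,5) c(1) Y_obj zero_hom cmp_jac_rad_right by blast
  then show ?case using ip_step factors_mod_rad_madd by blast
qed

lemma factors_mod_rad_Ys:
  assumes i: "i < n" and \<psi>: "\<psi> \<in> I X (Ys i)"
  shows "factors_mod_rad (Ys i) \<psi>"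
proof -
  obtain cs where "length cs = m i"
    and rest: "msub C \<psi> (msum X (Ys i) [0..<m i] (\<lambda>j. smul C (cs ! j) (fc i j))) \<in> JI X (Ys i)"
    using fc_span[OF i \<psi>] by blast
  define L where "L = msum X (Ys i) [0..<m i] (\<lambda>j. smul C (cs ! j) (fc i j))"
  have "factors_mod_rad (Ys i) (fc i j)" if "j < m i" for j
    using that i fc_eq fc_hom u_hom pi_hom A0_obj Ys_obj zero_in_jac_rad
    by (intro bexI[of _ "\<pi> (i, j)"] bexI[of _ "mzero C A0 (Ys i)"]) (auto simp: hom_iff)
  then have L: "factors_mod_rad (Ys i) L"
    unfolding L_def using Ys_obj[OF i] by (intro factors_mod_rad_msum factors_mod_rad_smul) auto
  have "\<psi> \<in> Hom C X (Ys i)" using \<psi> I_subset_hom by blast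
  then have "madd C L (msub C \<psi> L) = \<psi>"
    using factors_mod_rad_hom[OF L] by (subst madd_msub_cancel) (auto simp: hom_iff)
  moreover have "factors_mod_rad (Ys i) (msub C \<psi> L)"
    using rest Ys_obj[OF i] factors_mod_rad_JI unfolding L_def by blast
  ultimately show ?thesis using factors_mod_rad_madd[OF L] by metis
qed

lemma factors_mod_rad_local:
  assumes l: "local_end C W" and \<phi>: "\<phi> \<in> I X W"
  shows "factors_mod_rad W \<phi>"
proof (cases "irr_minus_nonzero C I X W")
  case False
  then show ?thesis using \<phi> factors_mod_rad_JI local_end_obj[OF l] unfolding irr_minus_nonzero_def by blast
next
  case True
  then obtain i s where i: "i < n" and s: "is_iso C W (Ys i) s"
    using irr_complete local_end_indecomposable[OF l] unfolding isomorphic_def by blast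
  obtain t where t: "t \<in> Hom C (Ys i) W" "cmp C t s = idt C W" using iso_inverse[OF s] by blast
  have "factors_mod_rad (Ys i) (cmp C s \<phi>)"
    using i \<phi> iso_hom[OF s] ideal_I ideal_cmp_left by (intro factors_mod_rad_Ys) auto
  then have "factors_mod_rad W (cmp C t (cmp C s \<phi>))" using t(1) by (rule factors_mod_rad_cmp)
  moreover have "cmp C t (cmp C s \<phi>) = \<phi>"
  proof -
    have \<phi>: "\<phi> \<in> Hom C X W" using \<phi> I_subset_hom by blast
    then have "cmp C t (cmp C s \<phi>) = cmp C (cmp C t s) \<phi>" using t(1) iso_hom[OF s] by (simp add: hom_iff cmp_assoc)
    then show ?thesis using t(2) \<phi> by (simp add: hom_iff)
  qed
  ultimately show ?thesis by simp
qed

lemma factors_mod_rad_all: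
  assumes W: "W \<in> Obj C" and \<phi>: "\<phi> \<in> I X W"
  shows "factors_mod_rad W \<phi>"
proof -
  obtain As and \<iota>' \<pi>' :: "nat \<Rightarrow> 'm" where loc: "\<forall>A\<in>set As. local_end C A"
    and b: "is_biproduct C [0..<length As] (\<lambda>i. As ! i) W \<iota>' \<pi>'"
    using krull_schmidt_cat W unfolding krull_schmidt_def by blast
  note bp = is_biproduct_uptD[OF b]
  have "factors_mod_rad W (msum X W [0..<length As] (\<lambda>k. cmp C (\<iota>' k) (cmp C (\<pi>' k) \<phi>)))"
  proof (rule factors_mod_rad_msum[OF W])
    fix k assume "k \<in> set [0..<length As]"
    then have k: "k < length As" by simp
    have "cmp C (\<pi>' k) \<phi> \<in> I X (As ! k)" using bp(3)[OF k] \<phi> ideal_I ideal_cmp_left by blast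
    then have "factors_mod_rad (As ! k) (cmp C (\<pi>' k) \<phi>)" using factors_mod_rad_local loc k by simp
    then show "factors_mod_rad W (cmp C (\<iota>' k) (cmp C (\<pi>' k) \<phi>))" using factors_mod_rad_cmp bp(2)[OF k] by blast
  qed
  then show ?thesis using biproduct_expand_target[OF b] \<phi> I_subset_hom by force
qed

lemma u_factors_through_f: "\<exists>w\<in>Hom C Y A0. u = cmp C w f"
proof -
  obtain h r where hr: "h \<in> Hom C Y A0" "r \<in> jac_rad C A0 A0" "u = madd C (cmp C h f) (cmp C r u)"
    using factors_mod_rad_all[OF A0_obj u_in_I] by blast
  have rh: "r \<in> Hom C A0 A0" using hr jac_rad_hom by blast
  have "is_iso C A0 A0 (msub C (idt C A0) (cmp C (idt C A0) r))"
    using hr(2) A0_obj id_hom unfolding in_jac_rad_iff by blast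
  then obtain v where v: "v \<in> Hom C A0 A0" "cmp C v (msub C (idt C A0) r) = idt C A0"
    using rh unfolding is_iso_def by (auto simp: hom_iff)
  have "cmp C (msub C (idt C A0) r) u = msub C u (cmp C r u)"
    using rh u_hom A0_obj by (simp add: hom_iff cmp_msub_left)
  also have "\<dots> = cmp C h f"
    using hr rh u_hom f_hom by (subst msub_eq_iff) (auto simp: hom_iff madd_comm)
  finally have e: "cmp C (msub C (idt C A0) r) u = cmp C h f" .
  have "u = cmp C (cmp C v (msub C (idt C A0) r)) u" using v u_hom by (simp add: hom_iff)
  also have "\<dots> = cmp C (cmp C v h) f"
    using v(1) rh u_hom A0_obj hr(1) f_hom by (simp add: hom_iff cmp_assoc e[symmetric])
  finally show ?thesis using v hr cmp_hom by blast
qed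

end

lemma f_left_approx: "left_approx C I X Y f"
proof -
  obtain A0 u where la: "left_approx C I X A0 u" using left_approx_exist X_obj by blast
  obtain w where w: "w \<in> Hom C Y A0" "u = cmp C w f" using u_factors_through_f[OF la] by blast
  have "\<exists>h\<in>Hom C Y A'. f' = cmp C h f" if f': "f' \<in> I X A'" for A' f'
  proof -
    obtain c where c: "c \<in> Hom C A0 A'" "f' = cmp C c u" using factor_through_u[OF la f'] by blast
    have "f' = cmp C (cmp C c w) f" using c w f_hom by (simp add: hom_iff cmp_assoc)
    then show ?thesis using c w cmp_hom by blast
  qed
  then show ?thesis unfolding left_approx_def using f_in_I by blast
qed

subsection \<open>Left minimality\<close>

lemma cmp_f_expansion:
  assumes "h \<in> Hom C Y W"
  shows "cmp C h f = msum X W idx (\<lambda>b. cmp C (cmp C h (\<iota> b)) (fc (fst b) (snd b)))"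
proof -
  have "cmp C (\<iota> b) (cmp C (\<pi> b) f) \<in> Hom C X Y" if "b \<in> set idx" for b
    using that iota_hom_idx pi_hom_idx f_hom by (meson cmp_hom)
  then have "cmp C h f = msum X W idx (\<lambda>b. cmp C h (cmp C (\<iota> b) (cmp C (\<pi> b) f)))"
    using assms X_obj by (subst biproduct_expand_target[OF Y_biproduct f_hom], intro cmp_msum_right) auto
  also have "\<dots> = msum X W idx (\<lambda>b. cmp C (cmp C h (\<iota> b)) (fc (fst b) (snd b)))"
    using assms iota_hom_idx pi_hom_idx f_hom fc_eq fc_hom
    by (intro msum_cong) (auto simp: hom_iff cmp_assoc idx_mem elim!: idx_cases)
  finally show ?thesis .
qed

text \<open>Diagonal blocks have an eigenvalue, off-diagonal blocks are radical.\<close>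

lemma scalar_plus_rad:
  assumes i: "i < n" and G: "\<And>b. b \<in> set idx \<Longrightarrow> G b \<in> Hom C (Ys (fst b)) (Ys i)"
  obtains lam where "\<And>b. b \<in> set idx \<Longrightarrow> msub C (G b)
      (if fst b = i then smul C (lam b) (idt C (Ys i)) else mzero C (Ys (fst b)) (Ys i))
    \<in> jac_rad C (Ys (fst b)) (Ys i)"
proof -
  define lam where "lam b = (SOME x. msub C (G b) (smul C x (idt C (Ys i))) \<in> jac_rad C (Ys i) (Ys i))" for b
  show ?thesis
  proof (rule that)
    fix b assume b: "b \<in> set idx"
    have fb: "fst b < n" using b by (auto elim: idx_cases)
    show "msub C (G b) (if fst b = i then smul C (lam b) (idt C (Ys i)) else mzero C (Ys (fst b)) (Ys i))
      \<in> jac_rad C (Ys (fst b)) (Ys i)"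
    proof (cases "fst b = i")
      case True
      then have "\<exists>x. msub C (G b) (smul C x (idt C (Ys i))) \<in> jac_rad C (Ys i) (Ys i)"
        using local_end_eigenvalue[OF alg_closed_field hom_fin Ys_local[OF i]] G[OF b] by simp
      then have "msub C (G b) (smul C (lam b) (idt C (Ys i))) \<in> jac_rad C (Ys i) (Ys i)"
        unfolding lam_def by (rule someI_ex)
      then show ?thesis using True by simp
    next
      case False
      then have "G b \<in> jac_rad C (Ys (fst b)) (Ys i)"
        using Ys_pairwise_nonisomorphic fb i G[OF b] Ys_local
        by (intro hom_in_jac_rad_if_not_isomorphic) auto
      then show ?thesis using False G[OF b] by (simp add: hom_iff)
    qed
  qed
qed

lemma fc_coefficients_unique:
  assumes i: "i < n" and j: "j < m i" and j': "j' < m i"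
    and rel: "msub C (fc i j) (msum X (Ys i) [0..<m i] (\<lambda>k. smul C (lam k) (fc i k))) \<in> JI X (Ys i)"
  shows "lam j' = (if j' = j then 1 else 0)"
proof -
  define \<delta> :: "nat \<Rightarrow> 'k" where "\<delta> k = (if k = j then 1 else 0)" for k
  define cs where "cs = map (\<lambda>k. \<delta> k - lam k) [0..<m i]"
  have Yi: "Ys i \<in> Obj C" and fc: "\<And>k. k < m i \<Longrightarrow> fc i k \<in> Hom C X (Ys i)"
    using Ys_obj fc_hom i by auto
  have "msum X (Ys i) [0..<m i] (\<lambda>k. smul C (cs ! k) (fc i k))
      = msum X (Ys i) [0..<m i] (\<lambda>k. msub C (smul C (\<delta> k) (fc i k)) (smul C (lam k) (fc i k)))"
    using fc by (intro msum_cong) (simp add: cs_def smul_diff_scalar hom_iff)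
  also have "\<dots> = msub C (msum X (Ys i) [0..<m i] (\<lambda>k. smul C (\<delta> k) (fc i k)))
      (msum X (Ys i) [0..<m i] (\<lambda>k. smul C (lam k) (fc i k)))"
    using X_obj Yi fc by (intro msum_msub) (auto intro: smul_hom)
  also have "msum X (Ys i) [0..<m i] (\<lambda>k. smul C (\<delta> k) (fc i k)) = fc i j"
    using X_obj Yi fc j by (subst msum_single[of _ _ _ j]) (auto simp: \<delta>_def hom_iff intro: smul_hom)
  finally have "\<forall>c\<in>set cs. c = 0"
    using rel by (intro fc_independent[OF i]) (simp_all add: cs_def)
  then show ?thesis using j' by (simp add: cs_def \<delta>_def)
qed

lemma endo_fixing_f_block:
  assumes i: "i < n" and j: "j < m i" and g: "g \<in> Hom C Y Y" and gf: "cmp C g f = f"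
    and b: "b \<in> set idx"
  shows "msub C (cmp C (\<pi> (i, j)) (cmp C g (\<iota> b))) (cmp C (\<pi> (i, j)) (\<iota> b)) \<in> jac_rad C (Ys (fst b)) (Ys i)"
proof -
  define G where "G b = cmp C (\<pi> (i, j)) (cmp C g (\<iota> b))" for b
  have Yi: "Ys i \<in> Obj C" using Ys_obj i by blast
  have G_hom: "G b \<in> Hom C (Ys (fst b)) (Ys i)" if "b \<in> set idx" for b
    unfolding G_def using that iota_hom_idx g pi_hom[OF i j] by (meson cmp_hom)
  obtain lam where lam: "\<And>b. b \<in> set idx \<Longrightarrow> msub C (G b)
      (if fst b = i then smul C (lam b) (idt C (Ys i)) else mzero C (Ys (fst b)) (Ys i))
    \<in> jac_rad C (Ys (fst b)) (Ys i)"
    using scalar_plus_rad[OF i G_hom] by blast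
  define D where "D b = (if fst b = i then smul C (lam b) (idt C (Ys i)) else mzero C (Ys (fst b)) (Ys i))" for b
  have D_hom: "D b \<in> Hom C (Ys (fst b)) (Ys i)" if "b \<in> set idx" for b
    using that Yi Ys_obj by (auto simp: D_def hom_iff elim!: idx_cases)
  have fcb: "fc (fst b) (snd b) \<in> Hom C X (Ys (fst b))" if "b \<in> set idx" for b
    using that fc_hom by (auto elim: idx_cases)
  have GD_fc: "cmp C (G b) (fc (fst b) (snd b)) \<in> Hom C X (Ys i)" "cmp C (D b) (fc (fst b) (snd b)) \<in> Hom C X (Ys i)"
    if "b \<in> set idx" for b
    using that G_hom D_hom fcb cmp_hom by blast+
  have expand: "fc i j = msum X (Ys i) idx (\<lambda>b. cmp C (G b) (fc (fst b) (snd b)))"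
    using cmp_f_expansion[of "cmp C (\<pi> (i, j)) g"] fc_eq[OF i j] gf g pi_hom[OF i j] iota_hom_idx f_hom
    by (auto simp: G_def hom_iff cmp_assoc intro!: msum_cong)
  have diagonal: "msum X (Ys i) idx (\<lambda>b. cmp C (D b) (fc (fst b) (snd b)))
      = msum X (Ys i) [0..<m i] (\<lambda>k. smul C (lam (i, k)) (fc i k))"
    using i X_obj Yi D_hom fcb fc_hom
    by (subst msum_idx_block) (auto simp: D_def hom_iff intro!: msum_cong intro: cmp_hom)
  have "msub C (fc i j) (msum X (Ys i) [0..<m i] (\<lambda>k. smul C (lam (i, k)) (fc i k)))
      = msum X (Ys i) idx (\<lambda>b. msub C (cmp C (G b) (fc (fst b) (snd b))) (cmp C (D b) (fc (fst b) (snd b))))"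
    unfolding expand diagonal[symmetric] using X_obj Yi by (intro msum_msub[symmetric]) (simp_all add: GD_fc)
  also have "\<dots> = msum X (Ys i) idx (\<lambda>b. cmp C (msub C (G b) (D b)) (fc (fst b) (snd b)))"
    using G_hom D_hom fcb by (intro msum_cong) (simp add: hom_iff cmp_msub_left)
  also have "\<dots> \<in> JI X (Ys i)"
  proof (rule ideal_prod_msum[OF jac_rad_subset_hom I_subset_hom X_obj Yi])
    fix b assume b: "b \<in> set idx"
    have "fc (fst b) (snd b) \<in> I X (Ys (fst b))" using b fc_in_I by (auto elim: idx_cases)
    then show "cmp C (msub C (G b) (D b)) (fc (fst b) (snd b)) \<in> JI X (Ys i)"
      using lam[OF b] by (intro ideal_prod_cmp[OF jac_rad_subset_hom I_subset_hom X_obj Yi]) (simp_all add: D_def)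
  qed
  finally have "lam (i, k) = (if k = j then 1 else 0)" if "k < m i" for k
    using fc_coefficients_unique[where lam = "\<lambda>k. lam (i, k)", OF i j that] by simp
  then have "D b = cmp C (\<pi> (i, j)) (\<iota> b)" using b pi_iota[OF i j] Yi by (auto simp: D_def elim!: idx_cases)
  then show ?thesis using lam[OF b] by (simp add: G_def D_def)
qed

lemma f_left_minimal: "left_minimal C X Y f"
  unfolding left_minimal_def
proof (intro conjI ballI impI)
  show "f \<in> Hom C X Y" by (rule f_hom)
  fix g assume g: "g \<in> Hom C Y Y" and gf: "cmp C g f = f"
  have "msub C g (idt C Y) \<in> jac_rad C Y Y"
  proof (rule biproduct_components_jac_rad[OF Y_biproduct Y_biproduct])
    show "msub C g (idt C Y) \<in> Hom C Y Y" using g Y_obj by (simp add: hom_iff)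
    fix a b assume "a \<in> set idx" "b \<in> set idx"
    then show "cmp C (\<pi> a) (cmp C (msub C g (idt C Y)) (\<iota> b)) \<in> jac_rad C ((\<lambda>(i, j). Ys i) b) ((\<lambda>(i, j). Ys i) a)"
      using endo_fixing_f_block[OF _ _ g gf, of "fst a" "snd a" b] g Y_obj pi_hom_idx iota_hom_idx
      by (auto simp: hom_iff cmp_msub_left cmp_msub_right case_prod_beta elim!: idx_cases)
  qed
  then have "is_iso C Y Y (madd C (idt C Y) (msub C g (idt C Y)))" by (rule iso_id_plus_jac_rad)
  then show "is_iso C Y Y g" using g Y_obj by (simp add: madd_msub_cancel hom_iff)
qed

lemma f_source_map: "source_map C I X Y f"
  unfolding source_map_def using f_left_approx f_left_minimal by blast

end

section \<open>Duality\<close>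

definition op_cat :: "('o, 'm, 'k) kcat \<Rightarrow> ('o, 'm, 'k) kcat" where
  "op_cat C = C\<lparr>Hom := (\<lambda>X Y. Hom C Y X), cmp := (\<lambda>a b. cmp C b a), mzero := (\<lambda>X Y. mzero C Y X)\<rparr>"

lemma op_cat_simps[simp]: "Obj (op_cat C) = Obj C" "Hom (op_cat C) X Y = Hom C Y X" "cmp (op_cat C) a b = cmp C b a"
  "idt (op_cat C) = idt C" "madd (op_cat C) = madd C" "mzero (op_cat C) X Y = mzero C Y X" "smul (op_cat C) = smul C"
  by (simp_all add: op_cat_def)

lemma op_cat_mneg[simp]: "mneg (op_cat C) = mneg C" by (simp add: mneg_def fun_eq_iff)
lemma op_cat_msub[simp]: "msub (op_cat C) = msub C" by (simp add: msub_def fun_eq_iff)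
lemma op_cat_lsum[simp]: "lsum (op_cat C) X Y = lsum C Y X" by (simp add: lsum_def fun_eq_iff)
lemma op_cat_lincomb[simp]: "lincomb (op_cat C) X Y = lincomb C Y X" by (simp add: lincomb_def fun_eq_iff)
lemma op_cat_is_iso[simp]: "is_iso (op_cat C) X Y f = is_iso C Y X f" by (auto simp: is_iso_def)
lemma op_cat_isomorphic[simp]: "isomorphic (op_cat C) X Y = isomorphic C Y X" by (simp add: isomorphic_def)
lemma op_cat_is_zero_obj[simp]: "is_zero_obj (op_cat C) N = is_zero_obj C N" by (simp add: is_zero_obj_def)
lemma op_cat_is_biproduct[simp]: "is_biproduct (op_cat C) idx A Y \<iota> \<pi> = is_biproduct C idx A Y \<pi> \<iota>"
  unfolding is_biproduct_def by auto
lemma op_cat_indecomposable[simp]: "indecomposable (op_cat C) X = indecomposable C X"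
  unfolding indecomposable_def by auto
lemma op_cat_local_end[simp]: "local_end (op_cat C) X = local_end C X"
  unfolding local_end_def by simp
lemma op_cat_ex_biproduct: "(\<exists>Y (\<iota>::'i \<Rightarrow> 'm) \<pi>. is_biproduct (op_cat C) idx A Y \<iota> \<pi>) = (\<exists>Y (\<iota>::'i \<Rightarrow> 'm) \<pi>. is_biproduct C idx A Y \<iota> \<pi>)"
  by (simp only: op_cat_is_biproduct) blast
lemma op_cat_additive[simp]: "additive (op_cat C) = additive C"
  unfolding additive_def op_cat_simps op_cat_ex_biproduct ..
lemma op_cat_krull_schmidt[simp]: "krull_schmidt (op_cat C) = krull_schmidt C"
proof -
  have "(\<exists>As (\<iota>::nat \<Rightarrow> 'b) \<pi>. (\<forall>A\<in>set As. local_end C A) \<and> is_biproduct (op_cat C) [0..<length As] ((!) As) X \<iota> \<pi>) =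
        (\<exists>As (\<iota>::nat \<Rightarrow> 'b) \<pi>. (\<forall>A\<in>set As. local_end C A) \<and> is_biproduct C [0..<length As] ((!) As) X \<iota> \<pi>)" for X
    by (simp only: op_cat_is_biproduct) blast
  thus ?thesis unfolding krull_schmidt_def op_cat_additive op_cat_local_end op_cat_simps by simp
qed
lemma op_cat_hom_finite[simp]: "hom_finite (op_cat C) = hom_finite C"
  unfolding hom_finite_def by auto
lemma op_cat_quot_basis[simp]: "quot_basis (op_cat C) X Y V N fs = quot_basis C Y X V N fs"
  unfolding quot_basis_def by simp

lemma op_cat_left_approx[simp]: "left_approx (op_cat C) (\<lambda>X Y. I Y X) X A f = right_approx C I A X f"
  unfolding left_approx_def right_approx_def by simp
lemma op_cat_left_minimal[simp]: "left_minimal (op_cat C) X Y f = right_minimal C Y X f"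
  unfolding left_minimal_def right_minimal_def by simp
lemma op_cat_source_map[simp]: "source_map (op_cat C) (\<lambda>X Y. I Y X) X Y f = sink_map C I Y X f"
  unfolding source_map_def sink_map_def by simp

lemma op_cat_ideal_prod: "ideal_prod (op_cat C) (\<lambda>X Y. A Y X) (\<lambda>X Y. B Y X) X Y = ideal_prod C B A Y X"
proof (intro set_eqI iffI)
  fix x assume "x \<in> ideal_prod (op_cat C) (\<lambda>X Y. A Y X) (\<lambda>X Y. B Y X) X Y"
  thus "x \<in> ideal_prod C B A Y X"
  proof (induction rule: ideal_prod.induct)
    case ip_zero
    then show ?case by (simp add: ideal_prod.ip_zero)
  next
    case (ip_step b W a s)
    then show ?case by (auto intro: ideal_prod.ip_step)
  qed
next
  fix x assume "x \<in> ideal_prod C B A Y X"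
  thus "x \<in> ideal_prod (op_cat C) (\<lambda>X Y. A Y X) (\<lambda>X Y. B Y X) X Y"
  proof (induction rule: ideal_prod.induct)
    case ip_zero
    then show ?case using ideal_prod.ip_zero[where C="op_cat C" and X=X and Y=Y and A="\<lambda>X Y. A Y X" and B="\<lambda>X Y. B Y X"] by simp
  next
    case (ip_step b W a s)
    then show ?case using ideal_prod.ip_step[where C="op_cat C" and X=X and Y=Y and A="\<lambda>X Y. A Y X" and B="\<lambda>X Y. B Y X" and b=a and a=b and W=W] by simp
  qed
qed

context linear_category
begin

lemma linear_category_op_cat: "linear_category (op_cat C)"
  unfolding linear_category_iff_k_linear_cat k_linear_cat_def op_cat_simps op_cat_mneg
  apply (intro conjI)
  subgoal using hom_objects by blast
  subgoal using hom_unique by blast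
  subgoal using id_hom by blast
  subgoal using cmp_hom by blast
  subgoal by (simp add: hom_iff cmp_assoc)
  subgoal by (simp add: hom_iff)
  subgoal
    apply (intro ballI conjI allI impI)
    apply (simp_all add: hom_iff madd_mneg smul_madd smul_add_scalar)
    apply (simp_all add: madd_assoc)
    apply (simp_all add: madd_comm)
    done
  subgoal by (simp add: hom_iff cmp_madd_right)
  subgoal by (simp add: hom_iff cmp_madd_left)
  done

lemma op_cat_jac_rad: "jac_rad (op_cat C) X Y = jac_rad C Y X"
proof (intro set_eqI iffI)
  fix f assume f: "f \<in> jac_rad (op_cat C) X Y"
  have f_hom: "f \<in> Hom C Y X" using f by (simp add: jac_rad_def)
  show "f \<in> jac_rad C Y X" unfolding in_jac_rad_iff
  proof (intro conjI ballI)
    show "f \<in> Hom C Y X" by fact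
    fix g assume g: "g \<in> Hom C X Y"
    have "is_iso C X X (msub C (idt C X) (cmp C f g))" using f g by (simp add: jac_rad_def)
    thus "is_iso C Y Y (msub C (idt C Y) (cmp C g f))" using iso_one_minus_cmp_swap[OF g f_hom] by blast
  qed
next
  fix f assume f: "f \<in> jac_rad C Y X"
  have f_hom: "f \<in> Hom C Y X" using f jac_rad_hom by blast
  show "f \<in> jac_rad (op_cat C) X Y" unfolding jac_rad_def
  proof (simp, intro conjI ballI)
    show "f \<in> Hom C Y X" by fact
    fix g assume g: "g \<in> Hom C X Y"
    have "is_iso C Y Y (msub C (idt C Y) (cmp C g f))" using f g in_jac_rad_iff by blast
    thus "is_iso C X X (msub C (idt C X) (cmp C f g))" using iso_one_minus_cmp_swap[OF f_hom g] by blast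
  qed
qed

lemma op_cat_jac_rad_fun: "jac_rad (op_cat C) = (\<lambda>X Y. jac_rad C Y X)"
  using op_cat_jac_rad by (simp add: fun_eq_iff)

lemma op_cat_irr_minus_basis: "irr_minus_basis (op_cat C) (\<lambda>X Y. I Y X) X Y fs = irr_plus_basis C I Y X fs"
  unfolding irr_minus_basis_def irr_plus_basis_def op_cat_jac_rad_fun op_cat_ideal_prod by simp

lemma op_cat_irr_minus_nonzero: "irr_minus_nonzero (op_cat C) (\<lambda>X Y. I Y X) X Y = irr_plus_nonzero C I Y X"
  unfolding irr_minus_nonzero_def irr_plus_nonzero_def op_cat_jac_rad_fun op_cat_ideal_prod by simp

lemma op_cat_ideal: "is_ideal C I \<Longrightarrow> is_ideal (op_cat C) (\<lambda>X Y. I Y X)"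
  unfolding is_ideal_def by (simp add: mneg_def)

lemma isomorphic_sym: "isomorphic C X Y \<Longrightarrow> isomorphic C Y X"
  unfolding isomorphic_def using iso_inverse by blast

lemma source_map_if_irr_minus_basis:
  assumes "alg_closed TYPE('k)" and "hom_finite C" and "krull_schmidt C" and "is_ideal C I"
    and "\<forall>X\<in>Obj C. \<exists>A f. left_approx C I X A f" and "X \<in> Obj C"
    and "\<forall>i<n. indecomposable C (Ys i)" and "\<forall>i<n. \<forall>j<n. i \<noteq> j \<longrightarrow> \<not> isomorphic C (Ys i) (Ys j)"
    and "is_biproduct C (bp_index n m) (\<lambda>(i, j). Ys i) Y \<iota> \<pi>"
    and "f \<in> Hom C X Y" and "\<forall>i<n. \<forall>j<m i. cmp C (\<pi> (i, j)) f = fc i j \<and> fc i j \<in> I X (Ys i)"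
    and "\<forall>i<n. irr_minus_basis C I X (Ys i) (map (fc i) [0..<m i])"
    and "\<forall>Y'. indecomposable C Y' \<and> irr_minus_nonzero C I X Y' \<longrightarrow> (\<exists>i<n. isomorphic C Y' (Ys i))"
  shows "source_map C I X Y f"
  by (rule irr_basis_source.f_source_map[OF irr_basis_source.intro[OF linear_category_axioms irr_basis_source_axioms.intro[OF assms]]])

lemma sink_map_if_irr_plus_basis:
  assumes "alg_closed TYPE('k)" and "hom_finite C" and "krull_schmidt C" and "is_ideal C I"
    and "\<forall>Z\<in>Obj C. \<exists>A g. right_approx C I A Z g" and "Z \<in> Obj C"
    and "\<forall>i<n. indecomposable C (Ys i)" and "\<forall>i<n. \<forall>j<n. i \<noteq> j \<longrightarrow> \<not> isomorphic C (Ys i) (Ys j)"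
    and "is_biproduct C (bp_index n m) (\<lambda>(i, j). Ys i) Y \<iota> \<pi>"
    and "g \<in> Hom C Y Z" and "\<forall>i<n. \<forall>j<m i. cmp C g (\<iota> (i, j)) = gc i j \<and> gc i j \<in> I (Ys i) Z"
    and "\<forall>i<n. irr_plus_basis C I (Ys i) Z (map (gc i) [0..<m i])"
    and "\<forall>Y'. indecomposable C Y' \<and> irr_plus_nonzero C I Y' Z \<longrightarrow> (\<exists>i<n. isomorphic C Y' (Ys i))"
  shows "sink_map C I Y Z g"
proof -
  have "source_map (op_cat C) (\<lambda>X Y. I Y X) Z Y g"
  proof (rule linear_category.source_map_if_irr_minus_basis[OF linear_category_op_cat])
    show "\<forall>Y'. indecomposable (op_cat C) Y' \<and> irr_minus_nonzero (op_cat C) (\<lambda>X Y. I Y X) Z Y' \<longrightarrow>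
        (\<exists>i<n. isomorphic (op_cat C) Y' (Ys i))"
      using assms(13) isomorphic_sym by (simp add: op_cat_irr_minus_nonzero) blast
  qed (use assms in \<open>auto simp: op_cat_ideal op_cat_irr_minus_basis\<close>)
  then show ?thesis by simp
qed

end

theorem proposition4p9:
  fixes C :: "('o, 'm, 'k::field) kcat"
    and sh :: "'o \<Rightarrow> 'o" and shm :: "'m \<Rightarrow> 'm"
    and \<Delta> :: "('o \<times> 'o \<times> 'o \<times> 'm \<times> 'm \<times> 'm) set"
    and I :: "'o \<Rightarrow> 'o \<Rightarrow> 'm set"
    and X Z Y :: 'o and n :: nat and m :: "nat \<Rightarrow> nat" and Ys :: "nat \<Rightarrow> 'o"
    and \<iota> \<pi> :: "nat \<times> nat \<Rightarrow> 'm"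
    and f g :: 'm and fc gc :: "nat \<Rightarrow> nat \<Rightarrow> 'm"
  assumes "alg_closed TYPE('k)"
    and "triangulated C sh shm \<Delta>"
    and "hom_finite C"
    and "krull_schmidt C"
    and "is_ideal C I"
    and "functorially_finite C I"
    and "indecomposable C X"
    and "indecomposable C Z"
    and "\<forall>i<n. indecomposable C (Ys i)"
    and "\<forall>i<n. \<forall>j<n. i \<noteq> j \<longrightarrow> \<not> isomorphic C (Ys i) (Ys j)"
    and "is_biproduct C (bp_index n m) (\<lambda>(i, j). Ys i) Y \<iota> \<pi>"
  shows "(f \<in> Hom C X Y \<and>
          (\<forall>i<n. \<forall>j<m i. cmp C (\<pi> (i, j)) f = fc i j \<and> fc i j \<in> I X (Ys i)) \<and>
          (\<forall>i<n. irr_minus_basis C I X (Ys i) (map (fc i) [0..<m i])) \<and>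
          (\<forall>Y'. indecomposable C Y' \<and> irr_minus_nonzero C I X Y' \<longrightarrow>
                 (\<exists>i<n. isomorphic C Y' (Ys i)))
          \<longrightarrow> source_map C I X Y f)
       \<and>
         (g \<in> Hom C Y Z \<and>
          (\<forall>i<n. \<forall>j<m i. cmp C g (\<iota> (i, j)) = gc i j \<and> gc i j \<in> I (Ys i) Z) \<and>
          (\<forall>i<n. irr_plus_basis C I (Ys i) Z (map (gc i) [0..<m i])) \<and>
          (\<forall>Y'. indecomposable C Y' \<and> irr_plus_nonzero C I Y' Z \<longrightarrow>
                 (\<exists>i<n. isomorphic C Y' (Ys i)))
          \<longrightarrow> sink_map C I Y Z g)"
proof -
  interpret linear_category C
    using assms(2) by (simp add: triangulated_def linear_category_iff_k_linear_cat)
  have approx: "\<forall>X\<in>Obj C. \<exists>A f. left_approx C I X A f" "\<forall>Z\<in>Obj C. \<exists>A g. right_approx C I A Z g"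
    using assms(6) unfolding functorially_finite_def by blast+
  have objects: "X \<in> Obj C" "Z \<in> Obj C" using assms(7,8) by (simp_all add: indecomposable_def)
  show ?thesis
    using source_map_if_irr_minus_basis[OF assms(1,3,4,5) approx(1) objects(1) assms(9-11)]
      sink_map_if_irr_plus_basis[OF assms(1,3,4,5) approx(2) objects(2) assms(9-11)]
    by blast
qed

end
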